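(* (Completeness) Let $\mathfrak M=(\mathfrak T,\mathcal V)$ be a TFL model and $\phi$ a TFL formula in positive normal form, and let $H_0=(\mathfrak X(s_0),t_\epsilon)$ be the initial process. If $H_0\in[\![\phi]\!]^{\mathfrak T}_{\mathcal V}$, then Eve has a winning strategy in the model-checking game $\mathcal G(H_0,\phi)$.
   Context: Systems: $\mathfrak T=(S,s_0,T,I,\Sigma)$, a transition system with independence (states $S$, initial $s_0$, labels $\Sigma$, transitions $T\subseteq S\times\Sigma\times S$, irreflexive symmetric independence $I\subseteq T\times T$ satisfying the standard TSI axioms), image-finite. For $t=(s,a,s')$: $\sigma(t)=s,\tau(t)=s',\delta(t)=a$. $t\otimes t'$ iff $\sigma(t)=\sigma(t')\wedge tIt'$; $t\ominus t'$ iff $\tau(t)=\sigma(t')\wedge tIt'$; $t\le t'$ iff $\tau(t)=\sigma(t')\wedge\neg tIt'$. $\mathfrak X(s)$ = transitions with source $s$; conflict-free set = set with common source, pairwise $\otimes$; support sets = the $\mathfrak X(s)$ and non-empty conflict-free sets; $M\sqsubseteq R$ iff $M\subseteq R$ and no $t\in R\setminus M$ has $t\otimes t'$ for all $t'\in M$; $\mathcal X$ = all $\mathfrak X(s)$ and all support sets $M\sqsubseteq\mathfrak X(s)$; $\mathfrak A=T\cup\{t_\epsilon\}$ with fresh $t_\epsilon$, $\tau(t_\epsilon)=s_0$, $t_\epsilon\le t$ whenever $\sigma(t)=s_0$, never $t_\epsilon\ominus t$; processes $\mathfrak S=\mathcal X\times\mathfrak A$. TFL: formulas $\phi::=Z\mid\neg\phi\mid\phi\wedge\phi\mid\langle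 a\rangle_c\phi\mid\langle a\rangle_{nc}\phi\mid\langle\otimes\rangle\phi\mid\mu Z.\phi$ (free occurrences of $Z$ in $\mu Z.\phi$ under an even number of negations), with duals $\vee$, $[a]_c=\neg\langle a\rangle_c\neg$, $[a]_{nc}$, $[\otimes]=\neg\langle\otimes\rangle\neg$, $\nu Z.\phi=\neg\mu Z.\neg\phi[\neg Z/Z]$. A model is $(\mathfrak T,\mathcal V)$ with $\mathcal V:\mathrm{Var}\to2^{\mathfrak S}$. Semantics in $2^{\mathfrak S}$: $[\![Z]\!]=\mathcal V(Z)$, $\neg$ complement, $\wedge$ intersection, $[\![\langle a\rangle_c\phi]\!]=\{(R,t):\exists r\in R.\ \delta(r)=a,\ t\le r,\ (\mathfrak X(\tau(r)),r)\in[\![\phi]\!]\}$, $\langle a\rangle_{nc}$ likewise with $t\ominus r$, $[\![\langle\otimes\rangle\phi]\!]=\{(R,t):\exists M\in\mathcal X.\ M\sqsubseteq R,\ (M,t)\in[\![\phi]\!]\}$, $[\![\mu Z.\phi]\!]_{\mathcal V}=\bigcap\{Q\subseteq\mathfrak S:[\![\phi]\!]_{\mathcal V[Z:=Q]}\subseteq Q\}$. Positive normal form: negation only on variables, no two binders bind the same variable. $Sub(\phi)$ is the set of subformulas. Model-checking game $\mathcal G(H_0,\phi)$ between Eve and Adam: configurations $H\vdash\psi$ with $H\in\mathfrak S$, $\psi\in Sub(\phi)$; start $H_0\vdash\phi$. Rules: $H\vdash\mu Z.\psi$ or $H\vdash\nu Z.\psi$ moves to $H\vdash Z$; $H\vdash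 Z$ with $Z$ bound by $\mu Z.\psi$ or $\nu Z.\psi$ moves to $H\vdash\psi$; at $H\vdash\psi_0\vee\psi_1$ Eve (at $\wedge$, Adam) chooses $H\vdash\psi_i$; at $(R,t)\vdash\langle a\rangle_c\psi$ Eve (at $[a]_c\psi$, Adam) chooses $r\in R$ with $\delta(r)=a$, $t\le r$, moving to $(\mathfrak X(\tau(r)),r)\vdash\psi$; same for $\langle a\rangle_{nc}$/$[a]_{nc}$ with $t\ominus r$; at $(R,t)\vdash\langle\otimes\rangle\psi$ Eve (at $[\otimes]\psi$, Adam) chooses $M\in\mathcal X$ with $M\sqsubseteq R$, moving to $(M,t)\vdash\psi$. Adam wins a play iff it ends at $H\vdash Z$ ($Z$ free) with $H\notin\mathcal V(Z)$, or at a diamond configuration ($\langle a\rangle_c$, $\langle a\rangle_{nc}$, $\langle\otimes\rangle$) with no available choice, or is infinite and the syntactically outermost variable occurring infinitely often is bound by a $\mu$; Eve wins dually (ends at $H\vdash Z$ with $H\in\mathcal V(Z)$, at a box configuration with no available choice, or infinite with the outermost infinitely-often variable bound by a $\nu$). A player has a winning strategy if she/he can guarantee winning every play. *)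

theory Defs
  imports Main
begin

type_synonym ('s,'a) trans = "'s \<times> 'a \<times> 's"

record ('s,'a) tsi =
  states :: "'s set"
  init   :: 's
  trans  :: "('s,'a) trans set"
  indep  :: "(('s,'a) trans \<times> ('s,'a) trans) set"
  labels :: "'a set"

definition src :: "('s,'a) trans \<Rightarrow> 's" where "src t = fst t"
definition lab :: "('s,'a) trans \<Rightarrow> 'a" where "lab t = fst (snd t)"
definition tgt :: "('s,'a) trans \<Rightarrow> 's" where "tgt t = snd (snd t)"

text \<open>The relation used in the fourth TSI axiom: (s,a,s1) and (s2,a,u) are opposite sides
  of an independence square.\<close>
definition square :: "('s,'a) tsi \<Rightarrow> (('s,'a) trans \<times> ('s,'a) trans) set" where
  "square M = {((s,a,s1),(s2,a',u)) | s a s1 s2 a' u. a' = a \<and>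
      (\<exists>b. ((s,a,s1),(s,b,s2)) \<in> indep M \<and> ((s,a,s1),(s1,b,u)) \<in> indep M
         \<and> ((s,b,s2),(s2,a,u)) \<in> indep M)}"

definition is_tsi :: "('s,'a) tsi \<Rightarrow> bool" where
  "is_tsi M \<longleftrightarrow>
     init M \<in> states M \<and>
     trans M \<subseteq> states M \<times> labels M \<times> states M \<and>
     indep M \<subseteq> trans M \<times> trans M \<and>
     irrefl (indep M) \<and> sym (indep M) \<and>
     (\<forall>s a s' s''. (s,a,s') \<in> trans M \<longrightarrow> (s,a,s'') \<in> trans M \<longrightarrow> s' = s'') \<and>
     (\<forall>s a s1 b s2. ((s,a,s1),(s,b,s2)) \<in> indep M \<longrightarrow>
        (\<exists>u. ((s,a,s1),(s1,b,u)) \<in> indep M \<and> ((s,b,s2),(s2,a,u)) \<in> indep M)) \<and>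
     (\<forall>s a s1 b u. ((s,a,s1),(s1,b,u)) \<in> indep M \<longrightarrow>
        (\<exists>s2. ((s,a,s1),(s,b,s2)) \<in> indep M \<and> ((s,b,s2),(s2,a,u)) \<in> indep M)) \<and>
     (\<forall>t t' w. (t,t') \<in> (square M \<union> (square M)\<inverse>)\<^sup>* \<longrightarrow> (t',w) \<in> indep M \<longrightarrow> (t,w) \<in> indep M)"

definition image_finite :: "('s,'a) tsi \<Rightarrow> bool" where
  "image_finite M \<longleftrightarrow> (\<forall>s a. finite {s'. (s,a,s') \<in> trans M})"

datatype ('s,'a) act = Eps | Tr "('s,'a) trans"

type_synonym ('s,'a) proc = "('s,'a) trans set \<times> ('s,'a) act"

definition otimes :: "('s,'a) tsi \<Rightarrow> ('s,'a) trans \<Rightarrow> ('s,'a) trans \<Rightarrow> bool" where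
  "otimes M t t' \<longleftrightarrow> src t = src t' \<and> (t,t') \<in> indep M"

text \<open>t \<le> r and t \<ominus> r, for t a transition or the fresh initial transition Eps.\<close>
fun le_c :: "('s,'a) tsi \<Rightarrow> ('s,'a) act \<Rightarrow> ('s,'a) trans \<Rightarrow> bool" where
  "le_c M Eps r \<longleftrightarrow> src r = init M"
| "le_c M (Tr t) r \<longleftrightarrow> tgt t = src r \<and> (t,r) \<notin> indep M"

fun ominus :: "('s,'a) tsi \<Rightarrow> ('s,'a) act \<Rightarrow> ('s,'a) trans \<Rightarrow> bool" where
  "ominus M Eps r \<longleftrightarrow> False"
| "ominus M (Tr t) r \<longleftrightarrow> tgt t = src r \<and> (t,r) \<in> indep M"

definition Xs :: "('s,'a) tsi \<Rightarrow> 's \<Rightarrow> ('s,'a) trans set" where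
  "Xs M s = {t \<in> trans M. src t = s}"

definition conflict_free :: "('s,'a) tsi \<Rightarrow> ('s,'a) trans set \<Rightarrow> bool" where
  "conflict_free M N \<longleftrightarrow> N \<subseteq> trans M \<and> (\<exists>s. \<forall>t\<in>N. src t = s) \<and>
     (\<forall>t\<in>N. \<forall>t'\<in>N. t \<noteq> t' \<longrightarrow> otimes M t t')"

definition support_set :: "('s,'a) tsi \<Rightarrow> ('s,'a) trans set \<Rightarrow> bool" where
  "support_set M N \<longleftrightarrow> (\<exists>s\<in>states M. N = Xs M s) \<or> (N \<noteq> {} \<and> conflict_free M N)"

definition sqsub :: "('s,'a) tsi \<Rightarrow> ('s,'a) trans set \<Rightarrow> ('s,'a) trans set \<Rightarrow> bool" where
  "sqsub M N R \<longleftrightarrow> N \<subseteq> R \<and> \<not> (\<exists>t\<in>R - N. \<forall>t'\<in>N. otimes M t t')"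

definition calX :: "('s,'a) tsi \<Rightarrow> ('s,'a) trans set set" where
  "calX M = {Xs M s | s. s \<in> states M} \<union>
            {N. support_set M N \<and> (\<exists>s\<in>states M. sqsub M N (Xs M s))}"

definition acts :: "('s,'a) tsi \<Rightarrow> ('s,'a) act set" where
  "acts M = Tr ` trans M \<union> {Eps}"

definition procs :: "('s,'a) tsi \<Rightarrow> ('s,'a) proc set" where
  "procs M = calX M \<times> acts M"

definition H0 :: "('s,'a) tsi \<Rightarrow> ('s,'a) proc" where
  "H0 M = (Xs M (init M), Eps)"

section \<open>TFL formulas (with the derived duals as constructors, for positive normal form)\<close>

datatype ('a,'v) tfl =
    FVar 'v
  | FNeg "('a,'v) tfl"
  | FConj "('a,'v) tfl" "('a,'v) tfl"
  | FDisj "('a,'v) tfl" "('a,'v) tfl"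
  | DiaC 'a "('a,'v) tfl"
  | BoxC 'a "('a,'v) tfl"
  | DiaNC 'a "('a,'v) tfl"
  | BoxNC 'a "('a,'v) tfl"
  | DiaOt "('a,'v) tfl"
  | BoxOt "('a,'v) tfl"
  | Mu 'v "('a,'v) tfl"
  | Nu 'v "('a,'v) tfl"

fun sub :: "('a,'v) tfl \<Rightarrow> ('a,'v) tfl set" where
  "sub (FVar Z) = {FVar Z}"
| "sub (FNeg p) = insert (FNeg p) (sub p)"
| "sub (FConj p q) = insert (FConj p q) (sub p \<union> sub q)"
| "sub (FDisj p q) = insert (FDisj p q) (sub p \<union> sub q)"
| "sub (DiaC a p) = insert (DiaC a p) (sub p)"
| "sub (BoxC a p) = insert (BoxC a p) (sub p)"
| "sub (DiaNC a p) = insert (DiaNC a p) (sub p)"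
| "sub (BoxNC a p) = insert (BoxNC a p) (sub p)"
| "sub (DiaOt p) = insert (DiaOt p) (sub p)"
| "sub (BoxOt p) = insert (BoxOt p) (sub p)"
| "sub (Mu Z p) = insert (Mu Z p) (sub p)"
| "sub (Nu Z p) = insert (Nu Z p) (sub p)"

fun bvars :: "('a,'v) tfl \<Rightarrow> 'v list" where
  "bvars (FVar Z) = []"
| "bvars (FNeg p) = bvars p"
| "bvars (FConj p q) = bvars p @ bvars q"
| "bvars (FDisj p q) = bvars p @ bvars q"
| "bvars (DiaC a p) = bvars p"
| "bvars (BoxC a p) = bvars p"
| "bvars (DiaNC a p) = bvars p"
| "bvars (BoxNC a p) = bvars p"
| "bvars (DiaOt p) = bvars p"
| "bvars (BoxOt p) = bvars p"
| "bvars (Mu Z p) = Z # bvars p"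
| "bvars (Nu Z p) = Z # bvars p"

fun fvars :: "('a,'v) tfl \<Rightarrow> 'v set" where
  "fvars (FVar Z) = {Z}"
| "fvars (FNeg p) = fvars p"
| "fvars (FConj p q) = fvars p \<union> fvars q"
| "fvars (FDisj p q) = fvars p \<union> fvars q"
| "fvars (DiaC a p) = fvars p"
| "fvars (BoxC a p) = fvars p"
| "fvars (DiaNC a p) = fvars p"
| "fvars (BoxNC a p) = fvars p"
| "fvars (DiaOt p) = fvars p"
| "fvars (BoxOt p) = fvars p"
| "fvars (Mu Z p) = fvars p - {Z}"
| "fvars (Nu Z p) = fvars p - {Z}"

fun neg_on_vars :: "('a,'v) tfl \<Rightarrow> bool" where
  "neg_on_vars (FVar Z) = True"
| "neg_on_vars (FNeg p) = (\<exists>Z. p = FVar Z)"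
| "neg_on_vars (FConj p q) = (neg_on_vars p \<and> neg_on_vars q)"
| "neg_on_vars (FDisj p q) = (neg_on_vars p \<and> neg_on_vars q)"
| "neg_on_vars (DiaC a p) = neg_on_vars p"
| "neg_on_vars (BoxC a p) = neg_on_vars p"
| "neg_on_vars (DiaNC a p) = neg_on_vars p"
| "neg_on_vars (BoxNC a p) = neg_on_vars p"
| "neg_on_vars (DiaOt p) = neg_on_vars p"
| "neg_on_vars (BoxOt p) = neg_on_vars p"
| "neg_on_vars (Mu Z p) = neg_on_vars p"
| "neg_on_vars (Nu Z p) = neg_on_vars p"

text \<open>Positive normal form: negation only on variables, no two binders bind the same
  variable; moreover (well-formedness / well-naming) bound variables never occur negated
  (positivity of fixpoint bodies) and no variable occurs both free and bound.\<close>
definition pnf :: "('a,'v) tfl \<Rightarrow> bool" where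
  "pnf \<phi> \<longleftrightarrow> neg_on_vars \<phi> \<and> distinct (bvars \<phi>) \<and>
     (\<forall>Z\<in>set (bvars \<phi>). FNeg (FVar Z) \<notin> sub \<phi>) \<and>
     set (bvars \<phi>) \<inter> fvars \<phi> = {}"

definition dia_c :: "('s,'a) tsi \<Rightarrow> 'a \<Rightarrow> ('s,'a) proc set \<Rightarrow> ('s,'a) proc set" where
  "dia_c M a X = {(R,t) \<in> procs M. \<exists>r\<in>R. lab r = a \<and> le_c M t r \<and> (Xs M (tgt r), Tr r) \<in> X}"

definition dia_nc :: "('s,'a) tsi \<Rightarrow> 'a \<Rightarrow> ('s,'a) proc set \<Rightarrow> ('s,'a) proc set" where
  "dia_nc M a X = {(R,t) \<in> procs M. \<exists>r\<in>R. lab r = a \<and> ominus M t r \<and> (Xs M (tgt r), Tr r) \<in> X}"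

definition dia_ot :: "('s,'a) tsi \<Rightarrow> ('s,'a) proc set \<Rightarrow> ('s,'a) proc set" where
  "dia_ot M X = {(R,t) \<in> procs M. \<exists>N\<in>calX M. sqsub M N R \<and> (N,t) \<in> X}"

text \<open>Duals are interpreted literally as their defining negations; for \<nu> we unfold
  \<not>\<mu>Z.\<not>\<phi>[\<not>Z/Z] semantically.\<close>
fun sem :: "('s,'a) tsi \<Rightarrow> ('v \<Rightarrow> ('s,'a) proc set) \<Rightarrow> ('a,'v) tfl \<Rightarrow> ('s,'a) proc set" where
  "sem M V (FVar Z) = V Z"
| "sem M V (FNeg p) = procs M - sem M V p"
| "sem M V (FConj p q) = sem M V p \<inter> sem M V q"
| "sem M V (FDisj p q) = procs M - ((procs M - sem M V p) \<inter> (procs M - sem M V q))"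
| "sem M V (DiaC a p) = dia_c M a (sem M V p)"
| "sem M V (BoxC a p) = procs M - dia_c M a (procs M - sem M V p)"
| "sem M V (DiaNC a p) = dia_nc M a (sem M V p)"
| "sem M V (BoxNC a p) = procs M - dia_nc M a (procs M - sem M V p)"
| "sem M V (DiaOt p) = dia_ot M (sem M V p)"
| "sem M V (BoxOt p) = procs M - dia_ot M (procs M - sem M V p)"
| "sem M V (Mu Z p) = \<Inter>{Q. Q \<subseteq> procs M \<and> sem M (V(Z := Q)) p \<subseteq> Q}"
| "sem M V (Nu Z p) =
     procs M - \<Inter>{Q. Q \<subseteq> procs M \<and> procs M - sem M (V(Z := procs M - Q)) p \<subseteq> Q}"

type_synonym ('s,'a,'v) config = "('s,'a) proc \<times> ('a,'v) tfl"

definition body :: "('a,'v) tfl \<Rightarrow> 'v \<Rightarrow> ('a,'v) tfl" where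
  "body \<phi> Z = (THE \<psi>. Mu Z \<psi> \<in> sub \<phi> \<or> Nu Z \<psi> \<in> sub \<phi>)"

definition moves :: "('s,'a) tsi \<Rightarrow> ('a,'v) tfl \<Rightarrow> ('s,'a,'v) config \<Rightarrow> ('s,'a,'v) config set" where
  "moves M \<phi> c = (case c of ((R,t),\<psi>) \<Rightarrow> (case \<psi> of
       FVar Z \<Rightarrow> (if Z \<in> set (bvars \<phi>) then {((R,t), body \<phi> Z)} else {})
     | FNeg _ \<Rightarrow> {}
     | FConj p q \<Rightarrow> {((R,t),p), ((R,t),q)}
     | FDisj p q \<Rightarrow> {((R,t),p), ((R,t),q)}
     | DiaC a p \<Rightarrow> {((Xs M (tgt r), Tr r), p) | r. r \<in> R \<and> lab r = a \<and> le_c M t r}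
     | BoxC a p \<Rightarrow> {((Xs M (tgt r), Tr r), p) | r. r \<in> R \<and> lab r = a \<and> le_c M t r}
     | DiaNC a p \<Rightarrow> {((Xs M (tgt r), Tr r), p) | r. r \<in> R \<and> lab r = a \<and> ominus M t r}
     | BoxNC a p \<Rightarrow> {((Xs M (tgt r), Tr r), p) | r. r \<in> R \<and> lab r = a \<and> ominus M t r}
     | DiaOt p \<Rightarrow> {((N,t), p) | N. N \<in> calX M \<and> sqsub M N R}
     | BoxOt p \<Rightarrow> {((N,t), p) | N. N \<in> calX M \<and> sqsub M N R}
     | Mu Z p \<Rightarrow> {((R,t), FVar Z)}
     | Nu Z p \<Rightarrow> {((R,t), FVar Z)}))"

text \<open>Positions where Eve chooses; at all other positions with a choice Adam chooses
  (positions with a single successor are deterministic).\<close>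
definition eve_pos :: "('s,'a,'v) config \<Rightarrow> bool" where
  "eve_pos c = (case snd c of FDisj _ _ \<Rightarrow> True | DiaC _ _ \<Rightarrow> True | DiaNC _ _ \<Rightarrow> True
                 | DiaOt _ \<Rightarrow> True | _ \<Rightarrow> False)"

definition eve_wins_final :: "('v \<Rightarrow> ('s,'a) proc set) \<Rightarrow> ('s,'a,'v) config \<Rightarrow> bool" where
  "eve_wins_final V c = (case c of (H,\<psi>) \<Rightarrow> (case \<psi> of
       FVar Z \<Rightarrow> H \<in> V Z
     | FNeg p \<Rightarrow> (case p of FVar Z \<Rightarrow> H \<notin> V Z | _ \<Rightarrow> False)
     | BoxC _ _ \<Rightarrow> True
     | BoxNC _ _ \<Rightarrow> True
     | BoxOt _ \<Rightarrow> True
     | _ \<Rightarrow> False))"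

definition inf_often_var :: "(nat \<Rightarrow> ('s,'a,'v) config) \<Rightarrow> 'v \<Rightarrow> bool" where
  "inf_often_var p Z \<longleftrightarrow> infinite {i. snd (p i) = FVar Z}"

text \<open>Eve wins an infinite play iff the syntactically outermost variable occurring
  infinitely often is bound by a \<nu>.\<close>
definition eve_wins_inf :: "('a,'v) tfl \<Rightarrow> (nat \<Rightarrow> ('s,'a,'v) config) \<Rightarrow> bool" where
  "eve_wins_inf \<phi> p \<longleftrightarrow> (\<exists>Z \<chi>. Nu Z \<chi> \<in> sub \<phi> \<and> inf_often_var p Z \<and>
      (\<forall>Z'. inf_often_var p Z' \<longrightarrow>
         (\<exists>\<chi>'. Mu Z' \<chi>' \<in> sub (Nu Z \<chi>) \<or> Nu Z' \<chi>' \<in> sub (Nu Z \<chi>))))"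

text \<open>Strategies for Eve map finite histories (nonempty lists of configurations, the last
  one being the current configuration) to the next configuration.\<close>
type_synonym ('s,'a,'v) strategy = "('s,'a,'v) config list \<Rightarrow> ('s,'a,'v) config"

definition partial_play :: "('s,'a) tsi \<Rightarrow> ('a,'v) tfl \<Rightarrow> ('s,'a,'v) config \<Rightarrow>
    ('s,'a,'v) strategy \<Rightarrow> ('s,'a,'v) config list \<Rightarrow> bool" where
  "partial_play M \<phi> c0 f ps \<longleftrightarrow> ps \<noteq> [] \<and> hd ps = c0 \<and>
     (\<forall>i. Suc i < length ps \<longrightarrow> ps ! Suc i \<in> moves M \<phi> (ps ! i) \<and>
         (eve_pos (ps ! i) \<longrightarrow> ps ! Suc i = f (take (Suc i) ps)))"

definition inf_play :: "('s,'a) tsi \<Rightarrow> ('a,'v) tfl \<Rightarrow> ('s,'a,'v) config \<Rightarrow>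
    ('s,'a,'v) strategy \<Rightarrow> (nat \<Rightarrow> ('s,'a,'v) config) \<Rightarrow> bool" where
  "inf_play M \<phi> c0 f p \<longleftrightarrow> p 0 = c0 \<and>
     (\<forall>i. p (Suc i) \<in> moves M \<phi> (p i) \<and>
         (eve_pos (p i) \<longrightarrow> p (Suc i) = f (map p [0..<Suc i])))"

definition eve_winning_strategy :: "('s,'a) tsi \<Rightarrow> ('v \<Rightarrow> ('s,'a) proc set) \<Rightarrow>
    ('s,'a) proc \<Rightarrow> ('a,'v) tfl \<Rightarrow> ('s,'a,'v) strategy \<Rightarrow> bool" where
  "eve_winning_strategy M V H \<phi> f \<longleftrightarrow>
     (\<forall>ps. partial_play M \<phi> (H,\<phi>) f ps \<longrightarrow> eve_pos (last ps) \<longrightarrow>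
         moves M \<phi> (last ps) \<noteq> {} \<longrightarrow> f ps \<in> moves M \<phi> (last ps)) \<and>
     (\<forall>ps. partial_play M \<phi> (H,\<phi>) f ps \<longrightarrow> moves M \<phi> (last ps) = {} \<longrightarrow>
         eve_wins_final V (last ps)) \<and>
     (\<forall>p. inf_play M \<phi> (H,\<phi>) f p \<longrightarrow> eve_wins_inf \<phi> p)"

definition eve_wins_game :: "('s,'a) tsi \<Rightarrow> ('v \<Rightarrow> ('s,'a) proc set) \<Rightarrow>
    ('s,'a) proc \<Rightarrow> ('a,'v) tfl \<Rightarrow> bool" where
  "eve_wins_game M V H \<phi> \<longleftrightarrow> (\<exists>f. eve_winning_strategy M V H \<phi> f)"

end

theory Submission
  imports Defs
begin

text \<open>Eve wins from \<open>(H, \<psi>)\<close> whenever \<open>H \<in> [[\<psi>]]\<close>, by induction on \<open>\<psi>\<close>. For the Boolean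
  and modal operators the semantics tells Eve how to move, and a winning strategy for the game of a
  subformula is still winning in the game of the whole formula. For \<open>\<mu>Z.\<chi>\<close>, the set \<open>P\<close> of
  processes from which Eve wins at \<open>Z\<close> is a prefixed point of the body: from \<open>[[\<chi>]]\<close> with \<open>Z\<close>
  interpreted as \<open>P\<close>, Eve plays the strategy for \<open>\<chi>\<close> until \<open>Z\<close> is reached and then the one
  for \<open>P\<close>, so \<open>P\<close> contains the least fixed point. For \<open>\<nu>Z.\<chi>\<close>, the semantics \<open>W\<close> is a
  postfixed point, and Eve restarts her strategy for \<open>\<chi>\<close> (with \<open>Z\<close> interpreted as \<open>W\<close>) at
  every unfolding of \<open>Z\<close>; a play unfolding \<open>Z\<close> infinitely often is hers because \<open>Z\<close> is then
  the outermost variable.\<close>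

section \<open>Plays and strategies of an abstract game\<close>

text \<open>The game is parameterised by its move function \<open>mv\<close> and by the winning conditions for Eve
  at dead ends (\<open>fw\<close>) and on infinite plays (\<open>iw\<close>), so that the games of a formula and of its
  subformulas can be related.\<close>

inductive history :: "(('s,'a,'v) config \<Rightarrow> ('s,'a,'v) config set) \<Rightarrow> ('s,'a,'v) config \<Rightarrow>
    ('s,'a,'v) strategy \<Rightarrow> ('s,'a,'v) config list \<Rightarrow> bool"
  for mv c0 f where
  start: "history mv c0 f [c0]"
| step: "history mv c0 f ps \<Longrightarrow> c \<in> mv (last ps) \<Longrightarrow> (eve_pos (last ps) \<longrightarrow> c = f ps) \<Longrightarrow>
    history mv c0 f (ps @ [c])"

lemma history_nonempty: "history mv c0 f ps \<Longrightarrow> ps \<noteq> []"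
  by (induction rule: history.induct) auto

lemma history_singleton_iff [simp]: "history mv c0 f [c] \<longleftrightarrow> c = c0"
proof
  assume "history mv c0 f [c]"
  then show "c = c0" by cases (auto dest: history_nonempty)
qed (simp add: history.start)

lemma history_snoc_iff:
  "ps \<noteq> [] \<Longrightarrow> history mv c0 f (ps @ [c]) \<longleftrightarrow>
     history mv c0 f ps \<and> c \<in> mv (last ps) \<and> (eve_pos (last ps) \<longrightarrow> c = f ps)"
  by (auto intro: history.step elim: history.cases)

lemma partial_play_snoc_iff:
  assumes "ps \<noteq> []"
  shows "partial_play M \<phi> c0 f (ps @ [c]) \<longleftrightarrow> partial_play M \<phi> c0 f ps \<and>
    c \<in> moves M \<phi> (last ps) \<and> (eve_pos (last ps) \<longrightarrow> c = f ps)"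
proof -
  obtain n where n: "length ps = Suc n" using assms by (cases ps) auto
  then show ?thesis
    unfolding partial_play_def using assms by (auto simp: nth_append last_conv_nth less_Suc_eq)
qed

lemma partial_play_iff_history: "partial_play M \<phi> c0 f ps \<longleftrightarrow> history (moves M \<phi>) c0 f ps"
proof (induction ps rule: rev_induct)
  case Nil
  then show ?case by (auto simp: partial_play_def dest: history_nonempty)
next
  case (snoc c ps)
  show ?case
  proof (cases "ps = []")
    case True
    then show ?thesis by (simp add: partial_play_def)
  next
    case False
    then show ?thesis using snoc.IH by (simp add: partial_play_snoc_iff history_snoc_iff)
  qed
qed

definition play_prefix :: "(nat \<Rightarrow> 'c) \<Rightarrow> nat \<Rightarrow> 'c list" where
  "play_prefix p n = map p [0..<Suc n]"

lemma play_prefix_0 [simp]: "play_prefix p 0 = [p 0]"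
  by (simp add: play_prefix_def)

lemma play_prefix_Suc: "play_prefix p (Suc n) = play_prefix p n @ [p (Suc n)]"
  by (simp add: play_prefix_def)

lemma play_prefix_nonempty [simp]: "play_prefix p n \<noteq> []"
  by (simp add: play_prefix_def)

lemma last_play_prefix [simp]: "last (play_prefix p n) = p n"
  by (simp add: play_prefix_def)

lemma hd_play_prefix [simp]: "hd (play_prefix p n) = p 0"
  by (simp add: play_prefix_def hd_map del: upt_Suc)

lemma set_play_prefix: "set (play_prefix p n) = p ` {..n}"
  by (auto simp: play_prefix_def atLeast0AtMost[symmetric] simp del: upt_Suc)

lemma play_prefix_shift: "play_prefix p (n + k) = map p [0..<k] @ play_prefix (\<lambda>i. p (i + k)) n"
  by (rule nth_equalityI) (auto simp: play_prefix_def nth_append add.commute)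

definition play :: "(('s,'a,'v) config \<Rightarrow> ('s,'a,'v) config set) \<Rightarrow> ('s,'a,'v) config \<Rightarrow>
    ('s,'a,'v) strategy \<Rightarrow> (nat \<Rightarrow> ('s,'a,'v) config) \<Rightarrow> bool" where
  "play mv c0 f p \<longleftrightarrow> (\<forall>n. history mv c0 f (play_prefix p n))"

lemma play_iff:
  "play mv c0 f p \<longleftrightarrow> p 0 = c0 \<and>
     (\<forall>i. p (Suc i) \<in> mv (p i) \<and> (eve_pos (p i) \<longrightarrow> p (Suc i) = f (play_prefix p i)))"
proof
  assume "play mv c0 f p"
  then show "p 0 = c0 \<and>
     (\<forall>i. p (Suc i) \<in> mv (p i) \<and> (eve_pos (p i) \<longrightarrow> p (Suc i) = f (play_prefix p i)))"
    unfolding play_def by (metis history_singleton_iff history_snoc_iff last_play_prefix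
        play_prefix_0 play_prefix_Suc play_prefix_nonempty)
next
  assume "p 0 = c0 \<and>
     (\<forall>i. p (Suc i) \<in> mv (p i) \<and> (eve_pos (p i) \<longrightarrow> p (Suc i) = f (play_prefix p i)))"
  then have "history mv c0 f (play_prefix p n)" for n
    by (induction n) (auto simp: play_prefix_Suc history_snoc_iff)
  then show "play mv c0 f p" unfolding play_def ..
qed

lemma inf_play_iff_play: "inf_play M \<phi> c0 f p \<longleftrightarrow> play (moves M \<phi>) c0 f p"
  unfolding inf_play_def play_iff by (simp add: play_prefix_def del: upt_Suc)

definition winning_strategy :: "(('s,'a,'v) config \<Rightarrow> ('s,'a,'v) config set) \<Rightarrow>
    (('s,'a,'v) config \<Rightarrow> bool) \<Rightarrow> ((nat \<Rightarrow> ('s,'a,'v) config) \<Rightarrow> bool) \<Rightarrow>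
    ('s,'a,'v) config \<Rightarrow> ('s,'a,'v) strategy \<Rightarrow> bool" where
  "winning_strategy mv fw iw c0 f \<longleftrightarrow>
     (\<forall>ps. history mv c0 f ps \<longrightarrow> eve_pos (last ps) \<longrightarrow> mv (last ps) \<noteq> {} \<longrightarrow>
        f ps \<in> mv (last ps)) \<and>
     (\<forall>ps. history mv c0 f ps \<longrightarrow> mv (last ps) = {} \<longrightarrow> fw (last ps)) \<and>
     (\<forall>p. play mv c0 f p \<longrightarrow> iw p)"

definition winning_from :: "(('s,'a,'v) config \<Rightarrow> ('s,'a,'v) config set) \<Rightarrow>
    (('s,'a,'v) config \<Rightarrow> bool) \<Rightarrow> ((nat \<Rightarrow> ('s,'a,'v) config) \<Rightarrow> bool) \<Rightarrow>
    ('s,'a,'v) config \<Rightarrow> bool" where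
  "winning_from mv fw iw c0 \<longleftrightarrow> (\<exists>f. winning_strategy mv fw iw c0 f)"

lemma eve_wins_game_iff:
  "eve_wins_game M V H \<phi> \<longleftrightarrow> winning_from (moves M \<phi>) (eve_wins_final V) (eve_wins_inf \<phi>) (H, \<phi>)"
  unfolding eve_wins_game_def eve_winning_strategy_def winning_from_def winning_strategy_def
    partial_play_iff_history inf_play_iff_play ..

lemma winning_strategy_someI:
  "winning_from mv fw iw c \<Longrightarrow> winning_strategy mv fw iw c (SOME f. winning_strategy mv fw iw c f)"
  unfolding winning_from_def by (rule someI_ex[of "winning_strategy mv fw iw c"])

lemma winning_strategyI:
  assumes "\<And>ps. history mv c0 f ps \<Longrightarrow> eve_pos (last ps) \<Longrightarrow> mv (last ps) \<noteq> {} \<Longrightarrow>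
      f ps \<in> mv (last ps)"
    and "\<And>ps. history mv c0 f ps \<Longrightarrow> mv (last ps) = {} \<Longrightarrow> fw (last ps)"
    and "\<And>p. play mv c0 f p \<Longrightarrow> iw p"
  shows "winning_strategy mv fw iw c0 f"
  using assms unfolding winning_strategy_def by blast

lemma winning_strategy_move:
  "winning_strategy mv fw iw c0 f \<Longrightarrow> history mv c0 f ps \<Longrightarrow> eve_pos (last ps) \<Longrightarrow>
    mv (last ps) \<noteq> {} \<Longrightarrow> f ps \<in> mv (last ps)"
  unfolding winning_strategy_def by blast

lemma winning_strategy_dead_end:
  "winning_strategy mv fw iw c0 f \<Longrightarrow> history mv c0 f ps \<Longrightarrow> mv (last ps) = {} \<Longrightarrow> fw (last ps)"
  unfolding winning_strategy_def by blast

lemma winning_strategy_play: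
  "winning_strategy mv fw iw c0 f \<Longrightarrow> play mv c0 f p \<Longrightarrow> iw p"
  unfolding winning_strategy_def by blast

section \<open>Composing strategies\<close>

definition prepend_strategy :: "('s,'a,'v) config \<Rightarrow> (('s,'a,'v) config \<Rightarrow> ('s,'a,'v) strategy) \<Rightarrow>
    ('s,'a,'v) strategy" where
  "prepend_strategy ch F ps = (case ps of _ # c # cs \<Rightarrow> F c (c # cs) | _ \<Rightarrow> ch)"

lemma history_prepend_strategy:
  assumes "history mv c0 (prepend_strategy ch F) ps"
  shows "ps = [c0] \<or> (\<exists>c cs. ps = c0 # c # cs \<and> c \<in> mv c0 \<and> (eve_pos c0 \<longrightarrow> c = ch) \<and>
    history mv c (F c) (c # cs))"
  using assms
proof (induction rule: history.induct)
  case (step ps x)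
  from step.IH show ?case
  proof
    assume "ps = [c0]"
    then show ?thesis using step.hyps by (simp add: prepend_strategy_def)
  next
    assume "\<exists>c cs. ps = c0 # c # cs \<and> c \<in> mv c0 \<and> (eve_pos c0 \<longrightarrow> c = ch) \<and>
      history mv c (F c) (c # cs)"
    then obtain c cs where ps: "ps = c0 # c # cs" "c \<in> mv c0" "eve_pos c0 \<longrightarrow> c = ch"
      "history mv c (F c) (c # cs)" by blast
    then have "history mv c (F c) (c # cs @ [x])"
      using step.hyps history_snoc_iff[of "c # cs" mv c "F c" x] by (simp add: prepend_strategy_def)
    then show ?thesis using ps by simp
  qed
qed simp

lemma play_prepend_strategy:
  assumes "play mv c0 (prepend_strategy ch F) p"
  shows "p 1 \<in> mv c0 \<and> (eve_pos c0 \<longrightarrow> p 1 = ch) \<and> play mv (p 1) (F (p 1)) (\<lambda>n. p (Suc n))"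
proof -
  let ?q = "\<lambda>n. p (Suc n)"
  have "p 1 \<in> mv c0 \<and> (eve_pos c0 \<longrightarrow> p 1 = ch) \<and> history mv (p 1) (F (p 1)) (play_prefix ?q n)" for n
  proof -
    have "history mv c0 (prepend_strategy ch F) (play_prefix p (Suc n))"
      using assms unfolding play_def ..
    also have "play_prefix p (Suc n) = p 0 # play_prefix ?q n"
      using play_prefix_shift[of p n 1] by simp
    finally have "history mv c0 (prepend_strategy ch F) (p 0 # play_prefix ?q n)" .
    then have "\<exists>c cs. play_prefix ?q n = c # cs \<and> c \<in> mv c0 \<and> (eve_pos c0 \<longrightarrow> c = ch) \<and>
        history mv c (F c) (c # cs)"
      using history_prepend_strategy[of mv c0 ch F "p 0 # play_prefix ?q n"] by simp
    then obtain c cs where "play_prefix ?q n = c # cs" "c \<in> mv c0" "eve_pos c0 \<longrightarrow> c = ch"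
      "history mv c (F c) (c # cs)" by blast
    moreover from this(1) have "c = p 1" using hd_play_prefix[of ?q n] by simp
    ultimately show ?thesis by simp
  qed
  then show ?thesis unfolding play_def by blast
qed

lemma winning_from_step:
  assumes eve: "eve_pos c0 \<Longrightarrow> \<exists>c\<in>mv c0. winning_from mv fw iw c"
    and adam: "\<not> eve_pos c0 \<Longrightarrow> \<forall>c\<in>mv c0. winning_from mv fw iw c"
    and dead_end: "mv c0 = {} \<Longrightarrow> fw c0"
    and shift: "\<And>p. iw (\<lambda>n. p (Suc n)) \<Longrightarrow> iw p"
  shows "winning_from mv fw iw c0"
proof -
  obtain ch where ch: "eve_pos c0 \<Longrightarrow> ch \<in> mv c0 \<and> winning_from mv fw iw ch"
    using eve by blast
  define F where "F c = (SOME g. winning_strategy mv fw iw c g)" for c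
  have F: "winning_strategy mv fw iw c (F c)" if "c \<in> mv c0" "eve_pos c0 \<longrightarrow> c = ch" for c
    unfolding F_def using that ch adam by (cases "eve_pos c0") (auto intro: winning_strategy_someI)
  let ?f = "prepend_strategy ch F"
  have "winning_strategy mv fw iw c0 ?f"
  proof (rule winning_strategyI)
    fix ps assume "history mv c0 ?f ps"
    then consider "ps = [c0]"
      | c cs where "ps = c0 # c # cs" "c \<in> mv c0" "eve_pos c0 \<longrightarrow> c = ch"
        "history mv c (F c) (c # cs)"
      using history_prepend_strategy by blast
    note cases = this
    show "?f ps \<in> mv (last ps)" if "eve_pos (last ps)" "mv (last ps) \<noteq> {}"
    proof (cases rule: cases)
      case (2 c cs)
      then show ?thesis
        using winning_strategy_move[OF F[OF 2(2,3)] 2(4)] that by (simp add: prepend_strategy_def)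
    qed (use that ch in \<open>simp add: prepend_strategy_def\<close>)
    show "fw (last ps)" if "mv (last ps) = {}"
    proof (cases rule: cases)
      case (2 c cs)
      then show ?thesis using winning_strategy_dead_end[OF F[OF 2(2,3)] 2(4)] that by simp
    qed (use that dead_end in simp)
  next
    fix p assume "play mv c0 ?f p"
    then have "iw (\<lambda>n. p (Suc n))"
      using play_prepend_strategy F winning_strategy_play by blast
    then show "iw p" by (rule shift)
  qed
  then show ?thesis unfolding winning_from_def by blast
qed

lemma dropWhile_first_in:
  "set xs \<inter> T = {} \<Longrightarrow> c \<in> T \<Longrightarrow> dropWhile (\<lambda>x. x \<notin> T) (xs @ c # cs) = c # cs"
  by (induction xs) auto

(* Follow \<open>\<sigma>\<close> until the first visit to \<open>T\<close>, then the strategy \<open>\<tau> c\<close> of the visited position. *)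
definition switch_strategy :: "('s,'a,'v) config set \<Rightarrow> ('s,'a,'v) strategy \<Rightarrow>
    (('s,'a,'v) config \<Rightarrow> ('s,'a,'v) strategy) \<Rightarrow> ('s,'a,'v) strategy" where
  "switch_strategy T \<sigma> \<tau> ps =
     (case dropWhile (\<lambda>c. c \<notin> T) ps of [] \<Rightarrow> \<sigma> ps | c # cs \<Rightarrow> \<tau> c (c # cs))"

lemma switch_strategy_before: "set ps \<inter> T = {} \<Longrightarrow> switch_strategy T \<sigma> \<tau> ps = \<sigma> ps"
proof -
  assume "set ps \<inter> T = {}"
  then have "dropWhile (\<lambda>c. c \<notin> T) ps = []" by (auto simp: dropWhile_eq_Nil_conv)
  then show ?thesis unfolding switch_strategy_def by (simp del: dropWhile_eq_Nil_conv)
qed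

lemma switch_strategy_after:
  "set xs \<inter> T = {} \<Longrightarrow> c \<in> T \<Longrightarrow> switch_strategy T \<sigma> \<tau> (xs @ c # cs) = \<tau> c (c # cs)"
  by (simp add: switch_strategy_def dropWhile_first_in)

lemma history_switch_strategy:
  assumes c0: "c0 \<in> S"
    and closed: "\<And>c. c \<in> S \<Longrightarrow> mv' c \<subseteq> S"
    and agree: "\<And>c. c \<in> S \<Longrightarrow> c \<notin> T \<Longrightarrow> mv c = mv' c"
    and "history mv c0 (switch_strategy T \<sigma> \<tau>) ps"
  shows "set ps \<inter> T = {} \<and> set ps \<subseteq> S \<and> history mv' c0 \<sigma> ps \<or>
    (\<exists>xs c cs. ps = xs @ c # cs \<and> set xs \<inter> T = {} \<and> c \<in> T \<and> set (xs @ [c]) \<subseteq> S \<and>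
       history mv' c0 \<sigma> (xs @ [c]) \<and> history mv c (\<tau> c) (c # cs))"
  using assms(4)
proof (induction rule: history.induct)
  case start
  show ?case
  proof (cases "c0 \<in> T")
    case True
    then show ?thesis using c0
      by (intro disjI2 exI[of _ "[]"] exI[of _ c0] exI[of _ "[]"]) (simp add: history.start)
  qed (use c0 in \<open>simp add: history.start\<close>)
next
  case (step ps x)
  have ne: "ps \<noteq> []" using step.hyps(1) by (rule history_nonempty)
  from step.IH show ?case
  proof
    assume before: "set ps \<inter> T = {} \<and> set ps \<subseteq> S \<and> history mv' c0 \<sigma> ps"
    then have last: "last ps \<in> S" "last ps \<notin> T" using last_in_set[OF ne] by blast+
    then have "x \<in> mv' (last ps)" using step.hyps(2) agree by simp
    moreover have "eve_pos (last ps) \<longrightarrow> x = \<sigma> ps"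
      using step.hyps(3) before switch_strategy_before by metis
    ultimately have "history mv' c0 \<sigma> (ps @ [x]) \<and> x \<in> S"
      using before ne closed[OF last(1)] by (auto simp: history_snoc_iff)
    then show ?thesis
    proof (cases "x \<in> T")
      case True
      then show ?thesis using before \<open>history mv' c0 \<sigma> (ps @ [x]) \<and> x \<in> S\<close>
        by (intro disjI2 exI[of _ ps] exI[of _ x] exI[of _ "[]"]) (simp add: history.start)
    qed (use before in simp)
  next
    assume "\<exists>xs c cs. ps = xs @ c # cs \<and> set xs \<inter> T = {} \<and> c \<in> T \<and> set (xs @ [c]) \<subseteq> S \<and>
       history mv' c0 \<sigma> (xs @ [c]) \<and> history mv c (\<tau> c) (c # cs)"
    then obtain xs c cs where after: "ps = xs @ c # cs" "set xs \<inter> T = {}" "c \<in> T"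
      "set (xs @ [c]) \<subseteq> S" "history mv' c0 \<sigma> (xs @ [c])" "history mv c (\<tau> c) (c # cs)"
      by blast
    then have "history mv c (\<tau> c) ((c # cs) @ [x])"
      using step.hyps history_snoc_iff[of "c # cs" mv c "\<tau> c" x] by (simp add: switch_strategy_after)
    then show ?thesis using after by (intro disjI2 exI[of _ xs] exI[of _ c] exI[of _ "cs @ [x]"]) simp
  qed
qed

lemma winning_strategy_subgame:
  assumes c0: "c0 \<in> S"
    and closed: "\<And>c. c \<in> S \<Longrightarrow> mv' c \<subseteq> S"
    and agree: "\<And>c. c \<in> S \<Longrightarrow> mv c = mv' c"
    and final: "\<And>c. c \<in> S \<Longrightarrow> fw' c \<Longrightarrow> fw c"
    and inf: "\<And>p. iw' p \<Longrightarrow> iw p"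
    and \<sigma>: "winning_strategy mv' fw' iw' c0 \<sigma>"
  shows "winning_strategy mv fw iw c0 \<sigma>"
proof -
  have "switch_strategy {} \<sigma> \<tau> = \<sigma>" for \<tau>
    by (simp add: fun_eq_iff switch_strategy_before)
  then have sub: "set ps \<subseteq> S \<and> history mv' c0 \<sigma> ps" if "history mv c0 \<sigma> ps" for ps
    using history_switch_strategy[of c0 S mv' "{}" mv \<sigma>] c0 closed agree that by fastforce
  show ?thesis
  proof (rule winning_strategyI)
    fix ps assume ps: "history mv c0 \<sigma> ps"
    have "last ps \<in> S" using sub[OF ps] last_in_set history_nonempty[OF ps] by blast
    then have last: "mv (last ps) = mv' (last ps)" "fw' (last ps) \<Longrightarrow> fw (last ps)"
      using agree final by blast+
    show "\<sigma> ps \<in> mv (last ps)" if "eve_pos (last ps)" "mv (last ps) \<noteq> {}"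
      using winning_strategy_move[OF \<sigma>] sub[OF ps] that last by simp
    show "fw (last ps)" if "mv (last ps) = {}"
      using winning_strategy_dead_end[OF \<sigma>] sub[OF ps] that last by simp
  next
    fix p assume "play mv c0 \<sigma> p"
    then have "play mv' c0 \<sigma> p" using sub unfolding play_def by blast
    then show "iw p" using inf winning_strategy_play[OF \<sigma>] by blast
  qed
qed

lemma play_switch_strategy:
  assumes c0: "c0 \<in> S"
    and closed: "\<And>c. c \<in> S \<Longrightarrow> mv' c \<subseteq> S"
    and agree: "\<And>c. c \<in> S \<Longrightarrow> c \<notin> T \<Longrightarrow> mv c = mv' c"
    and p: "play mv c0 (switch_strategy T \<sigma> \<tau>) p"
    and first: "p k \<in> T" "\<forall>i<k. p i \<notin> T"
  shows "(\<exists>xs. set (xs @ [p k]) \<subseteq> S \<and> history mv' c0 \<sigma> (xs @ [p k])) \<and>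
    play mv (p k) (\<tau> (p k)) (\<lambda>n. p (n + k))"
proof -
  define q where "q n = p (n + k)" for n
  have "(\<exists>xs. set (xs @ [p k]) \<subseteq> S \<and> history mv' c0 \<sigma> (xs @ [p k])) \<and>
      history mv (p k) (\<tau> (p k)) (play_prefix q n)" for n
  proof -
    define rest where "rest = tl (play_prefix q n)"
    have rest: "play_prefix q n = p k # rest"
      unfolding rest_def using hd_play_prefix[of q n] play_prefix_nonempty[of q n]
      by (metis list.collapse q_def add_0)
    have "history mv c0 (switch_strategy T \<sigma> \<tau>) (play_prefix p (n + k))" using p unfolding play_def ..
    also have "play_prefix p (n + k) = map p [0..<k] @ p k # rest"
      using play_prefix_shift[of p n k] rest unfolding q_def by simp
    finally have h: "history mv c0 (switch_strategy T \<sigma> \<tau>) (map p [0..<k] @ p k # rest)" .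
    have pre: "set (map p [0..<k]) \<inter> T = {}" using first(2) by auto
    have "set (map p [0..<k] @ p k # rest) \<inter> T \<noteq> {}" using first(1) by auto
    then obtain xs c cs
      where split: "map p [0..<k] @ p k # rest = xs @ c # cs" "set xs \<inter> T = {}" "c \<in> T"
        and c: "set (xs @ [c]) \<subseteq> S" "history mv' c0 \<sigma> (xs @ [c])" "history mv c (\<tau> c) (c # cs)"
      using history_switch_strategy[OF c0 closed agree h] by blast
    have "c # cs = p k # rest"
      using dropWhile_first_in[OF pre first(1), of rest] dropWhile_first_in[OF split(2,3), of cs]
      unfolding split(1) by simp
    then show ?thesis using c rest by auto
  qed
  then show ?thesis unfolding play_def q_def by blast
qed

lemma winning_switch_strategy:
  assumes c0: "c0 \<in> S"
    and closed: "\<And>c. c \<in> S \<Longrightarrow> mv' c \<subseteq> S"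
    and agree: "\<And>c. c \<in> S \<Longrightarrow> c \<notin> T \<Longrightarrow> mv c = mv' c"
    and \<sigma>: "winning_strategy mv' fw' iw' c0 \<sigma>"
    and final: "\<And>c. c \<in> S \<Longrightarrow> c \<notin> T \<Longrightarrow> fw' c \<Longrightarrow> fw c"
    and inf: "\<And>p. iw' p \<Longrightarrow> iw p"
    and shift: "\<And>p k. iw (\<lambda>n. p (n + k)) \<Longrightarrow> iw p"
    and \<tau>: "\<And>xs c. c \<in> T \<Longrightarrow> set (xs @ [c]) \<subseteq> S \<Longrightarrow> history mv' c0 \<sigma> (xs @ [c]) \<Longrightarrow>
      winning_strategy mv fw iw c (\<tau> c)"
  shows "winning_strategy mv fw iw c0 (switch_strategy T \<sigma> \<tau>)"
proof -
  let ?f = "switch_strategy T \<sigma> \<tau>"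
  show ?thesis
  proof (rule winning_strategyI)
    fix ps assume ps: "history mv c0 ?f ps"
    consider (before) "set ps \<inter> T = {}" "set ps \<subseteq> S" "history mv' c0 \<sigma> ps"
      | (after) xs c cs where "ps = xs @ c # cs" "set xs \<inter> T = {}" "c \<in> T" "set (xs @ [c]) \<subseteq> S"
        "history mv' c0 \<sigma> (xs @ [c])" "history mv c (\<tau> c) (c # cs)"
      using history_switch_strategy[OF c0 closed agree ps] by blast
    note phase = this
    have before_last: "last ps \<in> S" "last ps \<notin> T" if "set ps \<inter> T = {}" "set ps \<subseteq> S"
      using that last_in_set[OF history_nonempty[OF ps]] by blast+
    show "?f ps \<in> mv (last ps)" if "eve_pos (last ps)" "mv (last ps) \<noteq> {}"
    proof (cases rule: phase)
      case before
      then show ?thesis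
        using winning_strategy_move[OF \<sigma> before(3)] that agree[OF before_last[OF before(1,2)]]
        by (simp add: switch_strategy_before)
    next
      case (after xs c cs)
      then show ?thesis
        using winning_strategy_move[OF \<tau>[OF after(3-5)] after(6)] that
        by (simp add: switch_strategy_after)
    qed
    show "fw (last ps)" if "mv (last ps) = {}"
    proof (cases rule: phase)
      case before
      then show ?thesis
        using winning_strategy_dead_end[OF \<sigma> before(3)] that final[OF before_last[OF before(1,2)]]
          agree[OF before_last[OF before(1,2)]]
        by simp
    next
      case (after xs c cs)
      then show ?thesis using winning_strategy_dead_end[OF \<tau>[OF after(3-5)] after(6)] that by simp
    qed
  next
    fix p assume p: "play mv c0 ?f p"
    show "iw p"
    proof (cases "\<exists>i. p i \<in> T")
      case False
      have "history mv' c0 \<sigma> (play_prefix p n)" for n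
      proof -
        have "set (play_prefix p n) \<inter> T = {}" using False by (auto simp: set_play_prefix)
        then show ?thesis
          using history_switch_strategy[OF c0 closed agree p[unfolded play_def, rule_format, of n]]
          by auto
      qed
      then have "play mv' c0 \<sigma> p" unfolding play_def ..
      then show ?thesis using inf winning_strategy_play[OF \<sigma>] by blast
    next
      case True
      define k where "k = (LEAST i. p i \<in> T)"
      have pk: "p k \<in> T" unfolding k_def by (rule LeastI_ex[OF True])
      have "\<forall>i<k. p i \<notin> T" using not_less_Least[of _ "\<lambda>i. p i \<in> T"] unfolding k_def by blast
      then obtain xs where "set (xs @ [p k]) \<subseteq> S" "history mv' c0 \<sigma> (xs @ [p k])"
        and tail: "play mv (p k) (\<tau> (p k)) (\<lambda>n. p (n + k))"
        using play_switch_strategy[OF c0 closed agree p pk] by blast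
      then have "iw (\<lambda>n. p (n + k))" using \<tau> pk winning_strategy_play by blast
      then show ?thesis by (rule shift)
    qed
  qed
qed

lemma winning_from_switch:
  assumes c0: "c0 \<in> S"
    and closed: "\<And>c. c \<in> S \<Longrightarrow> mv' c \<subseteq> S"
    and agree: "\<And>c. c \<in> S \<Longrightarrow> c \<notin> T \<Longrightarrow> mv c = mv' c"
    and dead_end: "\<And>c. c \<in> S \<Longrightarrow> c \<in> T \<Longrightarrow> mv' c = {}"
    and \<sigma>: "winning_strategy mv' fw' iw' c0 \<sigma>"
    and final: "\<And>c. c \<in> S \<Longrightarrow> c \<notin> T \<Longrightarrow> fw' c \<Longrightarrow> fw c"
    and inf: "\<And>p. iw' p \<Longrightarrow> iw p"
    and shift: "\<And>p k. iw (\<lambda>n. p (n + k)) \<Longrightarrow> iw p"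
    and hit: "\<And>c. c \<in> S \<Longrightarrow> c \<in> T \<Longrightarrow> fw' c \<Longrightarrow> winning_from mv fw iw c"
  shows "winning_from mv fw iw c0"
proof -
  define \<tau> where "\<tau> c = (SOME g. winning_strategy mv fw iw c g)" for c
  have "winning_strategy mv fw iw c (\<tau> c)"
    if "c \<in> T" "set (xs @ [c]) \<subseteq> S" "history mv' c0 \<sigma> (xs @ [c])" for xs c
  proof -
    have "fw' c" using winning_strategy_dead_end[OF \<sigma> that(3)] dead_end that(1,2) by simp
    then show ?thesis unfolding \<tau>_def using hit that(1,2) by (simp add: winning_strategy_someI)
  qed
  with c0 closed agree \<sigma> final inf shift
  have "winning_strategy mv fw iw c0 (switch_strategy T \<sigma> \<tau>)"
    by (rule winning_switch_strategy)
  then show ?thesis unfolding winning_from_def by blast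
qed

(* After each visit \<open>c\<close> to \<open>T\<close>, play \<open>\<sigma> c\<close> on the part of the history following it. *)
definition restart_strategy :: "('s,'a,'v) config set \<Rightarrow> (('s,'a,'v) config \<Rightarrow> ('s,'a,'v) strategy) \<Rightarrow>
    ('s,'a,'v) strategy" where
  "restart_strategy T \<sigma> ps =
     \<sigma> (hd (dropWhile (\<lambda>c. c \<notin> T) (rev ps))) (rev (takeWhile (\<lambda>c. c \<notin> T) (rev ps)))"

lemma restart_strategy_eq:
  "c \<in> T \<Longrightarrow> set cs \<inter> T = {} \<Longrightarrow> restart_strategy T \<sigma> (xs @ c # cs) = \<sigma> c cs"
  using dropWhile_first_in[of "rev cs" T c "rev xs"]
  by (auto simp: restart_strategy_def takeWhile_append)

lemma split_at_last_in_unique: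
  assumes "xs @ c # cs = xs' @ c' # cs'" "c \<in> T" "c' \<in> T" "set cs \<inter> T = {}" "set cs' \<inter> T = {}"
  shows "c = c' \<and> cs = cs'"
proof -
  have "rev cs @ c # rev xs = rev cs' @ c' # rev xs'" using arg_cong[OF assms(1), of rev] by simp
  then have "c # rev xs = c' # rev xs'"
    using dropWhile_first_in[of "rev cs" T c "rev xs"] dropWhile_first_in[of "rev cs'" T c' "rev xs'"]
      assms(2-5) by simp
  then show ?thesis using assms(1) by simp
qed

lemma history_restart_strategy:
  assumes c0: "c0 \<in> S" "c0 \<in> T" "fw' c0"
    and closed: "\<And>c. c \<in> S \<Longrightarrow> mv' c \<subseteq> S"
    and agree: "\<And>c. c \<in> S \<Longrightarrow> c \<notin> T \<Longrightarrow> mv c = mv' c"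
    and exit: "\<And>c. c \<in> S \<Longrightarrow> c \<in> T \<Longrightarrow> mv c = {r c} \<and> r c \<in> S \<and> mv' c = {}"
    and \<sigma>: "\<And>c. c \<in> S \<Longrightarrow> c \<in> T \<Longrightarrow> fw' c \<Longrightarrow> winning_strategy mv' fw' iw' (r c) (\<sigma> c)"
    and "history mv c0 (restart_strategy T \<sigma>) ps"
  shows "set ps \<subseteq> S \<and> (\<exists>xs c cs. ps = xs @ c # cs \<and> c \<in> T \<and> fw' c \<and> set cs \<inter> T = {} \<and>
    (cs \<noteq> [] \<longrightarrow> history mv' (r c) (\<sigma> c) cs))"
  using assms(8)
proof (induction rule: history.induct)
  case start
  show ?case using c0 by (intro conjI exI[of _ "[]"] exI[of _ c0] exI[of _ "[]"]) simp_all
next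
  case (step ps x)
  from step.IH obtain xs c cs where ps: "set ps \<subseteq> S" "ps = xs @ c # cs" "c \<in> T" "fw' c"
    "set cs \<inter> T = {}" "cs \<noteq> [] \<longrightarrow> history mv' (r c) (\<sigma> c) cs"
    by blast
  have "c \<in> S" using ps(1,2) by auto
  have cont: "x \<in> S \<and> history mv' (r c) (\<sigma> c) (cs @ [x])"
  proof (cases "cs = []")
    case True
    then show ?thesis using step.hyps(2) ps(2) exit[OF \<open>c \<in> S\<close> ps(3)] by simp
  next
    case False
    have last: "last cs \<in> S" "last cs \<notin> T" using ps(1,2,5) last_in_set[OF False] by auto
    have "last ps = last cs" using ps(2) False by simp
    then have "x \<in> mv' (last cs)" "eve_pos (last cs) \<longrightarrow> x = \<sigma> c cs"
      using step.hyps(2,3) agree[OF last] restart_strategy_eq[OF ps(3,5)] ps(2) by simp_all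
    then show ?thesis using closed[OF last(1)] ps(6) False by (auto simp: history_snoc_iff)
  qed
  show ?case
  proof (cases "x \<in> T")
    case True
    have "mv' (last (cs @ [x])) = {}" using cont True exit by simp
    then have "fw' x"
      using winning_strategy_dead_end[OF \<sigma>[OF \<open>c \<in> S\<close> ps(3,4)]] cont by fastforce
    then show ?thesis
      using ps(1) cont True by (intro conjI exI[of _ ps] exI[of _ x] exI[of _ "[]"]) simp_all
  next
    case False
    then show ?thesis
      using ps cont by (intro conjI exI[of _ xs] exI[of _ c] exI[of _ "cs @ [x]"]) auto
  qed
qed

lemma play_restart_strategy:
  assumes c0: "c0 \<in> S" "c0 \<in> T" "fw' c0"
    and closed: "\<And>c. c \<in> S \<Longrightarrow> mv' c \<subseteq> S"
    and agree: "\<And>c. c \<in> S \<Longrightarrow> c \<notin> T \<Longrightarrow> mv c = mv' c"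
    and exit: "\<And>c. c \<in> S \<Longrightarrow> c \<in> T \<Longrightarrow> mv c = {r c} \<and> r c \<in> S \<and> mv' c = {}"
    and \<sigma>: "\<And>c. c \<in> S \<Longrightarrow> c \<in> T \<Longrightarrow> fw' c \<Longrightarrow> winning_strategy mv' fw' iw' (r c) (\<sigma> c)"
    and p: "play mv c0 (restart_strategy T \<sigma>) p"
    and last_visit: "p K \<in> T" "\<forall>i>K. p i \<notin> T"
  shows "p K \<in> S \<and> fw' (p K) \<and> play mv' (r (p K)) (\<sigma> (p K)) (\<lambda>n. p (n + Suc K))"
proof -
  define q where "q n = p (n + Suc K)" for n
  have "p K \<in> S \<and> fw' (p K) \<and> history mv' (r (p K)) (\<sigma> (p K)) (play_prefix q n)" for n
  proof -
    have "history mv c0 (restart_strategy T \<sigma>) (play_prefix p (n + Suc K))" using p unfolding play_def ..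
    also have "play_prefix p (n + Suc K) = map p [0..<K] @ p K # play_prefix q n"
      using play_prefix_shift[of p n "Suc K"] unfolding q_def by simp
    finally have h: "history mv c0 (restart_strategy T \<sigma>) (map p [0..<K] @ p K # play_prefix q n)" .
    have q: "set (play_prefix q n) \<inter> T = {}" using last_visit(2) by (auto simp: q_def set_play_prefix)
    from history_restart_strategy[OF c0 closed agree exit \<sigma> h]
    obtain xs c cs where seg: "set (map p [0..<K] @ p K # play_prefix q n) \<subseteq> S"
      "map p [0..<K] @ p K # play_prefix q n = xs @ c # cs" "c \<in> T" "fw' c" "set cs \<inter> T = {}"
      "cs \<noteq> [] \<longrightarrow> history mv' (r c) (\<sigma> c) cs"
      by blast
    moreover have "p K = c \<and> play_prefix q n = cs"
      using split_at_last_in_unique[OF seg(2) last_visit(1) seg(3) q seg(5)] .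
    ultimately show ?thesis by auto
  qed
  then show ?thesis unfolding play_def q_def by blast
qed

lemma history_restart_strategy_live:
  assumes c0: "c0 \<in> S" "c0 \<in> T" "fw' c0"
    and closed: "\<And>c. c \<in> S \<Longrightarrow> mv' c \<subseteq> S"
    and agree: "\<And>c. c \<in> S \<Longrightarrow> c \<notin> T \<Longrightarrow> mv c = mv' c"
    and exit: "\<And>c. c \<in> S \<Longrightarrow> c \<in> T \<Longrightarrow> mv c = {r c} \<and> r c \<in> S \<and> mv' c = {} \<and> \<not> eve_pos c"
    and \<sigma>: "\<And>c. c \<in> S \<Longrightarrow> c \<in> T \<Longrightarrow> fw' c \<Longrightarrow> winning_strategy mv' fw' iw' (r c) (\<sigma> c)"
    and ps: "history mv c0 (restart_strategy T \<sigma>) ps"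
    and live: "mv (last ps) = {} \<or> eve_pos (last ps)"
  shows "\<exists>xs c cs. ps = xs @ c # cs \<and> c \<in> S \<and> c \<in> T \<and> fw' c \<and> set cs \<inter> T = {} \<and> set cs \<subseteq> S \<and>
    cs \<noteq> [] \<and> history mv' (r c) (\<sigma> c) cs"
proof -
  have exit': "mv c = {r c} \<and> r c \<in> S \<and> mv' c = {}" if "c \<in> S" "c \<in> T" for c
    using exit[OF that] by blast
  obtain xs c cs where seg: "set ps \<subseteq> S" "ps = xs @ c # cs" "c \<in> T" "fw' c" "set cs \<inter> T = {}"
    "cs \<noteq> [] \<longrightarrow> history mv' (r c) (\<sigma> c) cs"
    using history_restart_strategy[OF c0 closed agree exit' \<sigma> ps] by blast
  have "c \<in> S" using seg(1,2) by auto
  have "cs \<noteq> []"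
  proof
    assume "cs = []"
    then have "last ps = c" using seg(2) by simp
    then show False using exit[OF \<open>c \<in> S\<close> seg(3)] live by simp
  qed
  then show ?thesis
    using seg \<open>c \<in> S\<close> by (intro exI[of _ xs] exI[of _ c] exI[of _ cs]) auto
qed

lemma winning_restart_strategy:
  assumes c0: "c0 \<in> S" "c0 \<in> T" "fw' c0"
    and closed: "\<And>c. c \<in> S \<Longrightarrow> mv' c \<subseteq> S"
    and agree: "\<And>c. c \<in> S \<Longrightarrow> c \<notin> T \<Longrightarrow> mv c = mv' c"
    and exit: "\<And>c. c \<in> S \<Longrightarrow> c \<in> T \<Longrightarrow> mv c = {r c} \<and> r c \<in> S \<and> mv' c = {} \<and> \<not> eve_pos c"
    and \<sigma>: "\<And>c. c \<in> S \<Longrightarrow> c \<in> T \<Longrightarrow> fw' c \<Longrightarrow> winning_strategy mv' fw' iw' (r c) (\<sigma> c)"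
    and final: "\<And>c. c \<in> S \<Longrightarrow> c \<notin> T \<Longrightarrow> fw' c \<Longrightarrow> fw c"
    and inf: "\<And>p k. iw' (\<lambda>n. p (n + k)) \<Longrightarrow> iw p"
    and recurrent: "\<And>p. infinite {i. p i \<in> T} \<Longrightarrow> (\<And>i. p (Suc i) \<in> mv (p i)) \<Longrightarrow> iw p"
  shows "winning_strategy mv fw iw c0 (restart_strategy T \<sigma>)"
proof -
  let ?f = "restart_strategy T \<sigma>"
  show ?thesis
  proof (rule winning_strategyI)
    fix ps assume ps: "history mv c0 ?f ps"
    note segment = history_restart_strategy_live[OF c0 closed agree exit \<sigma> ps]
    show "?f ps \<in> mv (last ps)" if eve: "eve_pos (last ps)" "mv (last ps) \<noteq> {}"
    proof -
      obtain xs c cs where seg: "ps = xs @ c # cs" "c \<in> S" "c \<in> T" "fw' c" "set cs \<inter> T = {}"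
        "set cs \<subseteq> S" "cs \<noteq> []" "history mv' (r c) (\<sigma> c) cs"
        using segment eve(1) by blast
      have last: "last ps = last cs" using seg(1,7) by simp
      have "last cs \<in> S" "last cs \<notin> T" using seg(5,6) last_in_set[OF seg(7)] by blast+
      then have "mv (last ps) = mv' (last cs)" using agree last by simp
      then show ?thesis
        using winning_strategy_move[OF \<sigma>[OF seg(2-4)] seg(8)] eve last
          restart_strategy_eq[OF seg(3,5)] seg(1) by simp
    qed
    show "fw (last ps)" if dead_end: "mv (last ps) = {}"
    proof -
      obtain xs c cs where seg: "ps = xs @ c # cs" "c \<in> S" "c \<in> T" "fw' c" "set cs \<inter> T = {}"
        "set cs \<subseteq> S" "cs \<noteq> []" "history mv' (r c) (\<sigma> c) cs"
        using segment dead_end by blast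
      have last: "last ps = last cs" using seg(1,7) by simp
      have "last cs \<in> S" "last cs \<notin> T" using seg(5,6) last_in_set[OF seg(7)] by blast+
      then show ?thesis
        using winning_strategy_dead_end[OF \<sigma>[OF seg(2-4)] seg(8)] agree final dead_end last by simp
    qed
  next
    fix p assume p: "play mv c0 ?f p"
    show "iw p"
    proof (cases "finite {i. p i \<in> T}")
      case False
      then show ?thesis using recurrent p by (simp add: play_iff)
    next
      case True
      define K where "K = Max {i. p i \<in> T}"
      have "p 0 = c0" using p by (simp add: play_iff)
      then have pK: "p K \<in> T" unfolding K_def using Max_in[OF True] c0(2) by auto
      have after: "\<forall>i>K. p i \<notin> T" using Max_ge[OF True] unfolding K_def by (auto simp: not_le[symmetric])
      have exit': "mv c = {r c} \<and> r c \<in> S \<and> mv' c = {}" if "c \<in> S" "c \<in> T" for c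
        using exit[OF that] by blast
      obtain "p K \<in> S" "fw' (p K)" and tail: "play mv' (r (p K)) (\<sigma> (p K)) (\<lambda>n. p (n + Suc K))"
        using play_restart_strategy[OF c0 closed agree exit' \<sigma> p pK after] by blast
      then have "iw' (\<lambda>n. p (n + Suc K))" using winning_strategy_play[OF \<sigma>[OF _ pK] tail] by blast
      then show ?thesis by (rule inf)
    qed
  qed
qed

lemma winning_from_restart:
  assumes c0: "c0 \<in> S" "c0 \<in> T" "fw' c0"
    and closed: "\<And>c. c \<in> S \<Longrightarrow> mv' c \<subseteq> S"
    and agree: "\<And>c. c \<in> S \<Longrightarrow> c \<notin> T \<Longrightarrow> mv c = mv' c"
    and exit: "\<And>c. c \<in> S \<Longrightarrow> c \<in> T \<Longrightarrow> mv c = {r c} \<and> r c \<in> S \<and> mv' c = {} \<and> \<not> eve_pos c"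
    and restart: "\<And>c. c \<in> S \<Longrightarrow> c \<in> T \<Longrightarrow> fw' c \<Longrightarrow> winning_from mv' fw' iw' (r c)"
    and final: "\<And>c. c \<in> S \<Longrightarrow> c \<notin> T \<Longrightarrow> fw' c \<Longrightarrow> fw c"
    and inf: "\<And>p k. iw' (\<lambda>n. p (n + k)) \<Longrightarrow> iw p"
    and recurrent: "\<And>p. infinite {i. p i \<in> T} \<Longrightarrow> (\<And>i. p (Suc i) \<in> mv (p i)) \<Longrightarrow> iw p"
  shows "winning_from mv fw iw c0"
proof -
  define \<sigma> where "\<sigma> c = (SOME g. winning_strategy mv' fw' iw' (r c) g)" for c
  have "winning_strategy mv' fw' iw' (r c) (\<sigma> c)" if "c \<in> S" "c \<in> T" "fw' c" for c
    unfolding \<sigma>_def using restart[OF that] by (rule winning_strategy_someI)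
  with c0 closed agree exit have "winning_strategy mv fw iw c0 (restart_strategy T \<sigma>)"
    using final inf recurrent by (rule winning_restart_strategy)
  then show ?thesis unfolding winning_from_def by blast
qed

lemma sub_refl [simp]: "\<phi> \<in> sub \<phi>"
  by (cases \<phi>) auto

lemma sub_trans: "\<psi> \<in> sub \<phi> \<Longrightarrow> \<chi> \<in> sub \<psi> \<Longrightarrow> \<chi> \<in> sub \<phi>"
  by (induction \<phi>) auto

definition binds :: "('a,'v) tfl \<Rightarrow> 'v \<Rightarrow> ('a,'v) tfl \<Rightarrow> bool" where
  "binds \<phi> Z \<chi> \<longleftrightarrow> Mu Z \<chi> \<in> sub \<phi> \<or> Nu Z \<chi> \<in> sub \<phi>"

lemma binds_simps [simp]:
  "\<not> binds (FVar Y) Z \<chi>"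
  "binds (FNeg p) Z \<chi> \<longleftrightarrow> binds p Z \<chi>"
  "binds (FConj p q) Z \<chi> \<longleftrightarrow> binds p Z \<chi> \<or> binds q Z \<chi>"
  "binds (FDisj p q) Z \<chi> \<longleftrightarrow> binds p Z \<chi> \<or> binds q Z \<chi>"
  "binds (DiaC a p) Z \<chi> \<longleftrightarrow> binds p Z \<chi>"
  "binds (BoxC a p) Z \<chi> \<longleftrightarrow> binds p Z \<chi>"
  "binds (DiaNC a p) Z \<chi> \<longleftrightarrow> binds p Z \<chi>"
  "binds (BoxNC a p) Z \<chi> \<longleftrightarrow> binds p Z \<chi>"
  "binds (DiaOt p) Z \<chi> \<longleftrightarrow> binds p Z \<chi>"
  "binds (BoxOt p) Z \<chi> \<longleftrightarrow> binds p Z \<chi>"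
  "binds (Mu Y p) Z \<chi> \<longleftrightarrow> Z = Y \<and> \<chi> = p \<or> binds p Z \<chi>"
  "binds (Nu Y p) Z \<chi> \<longleftrightarrow> Z = Y \<and> \<chi> = p \<or> binds p Z \<chi>"
  by (auto simp: binds_def)

lemma binds_in_bvars: "binds \<phi> Z \<chi> \<Longrightarrow> Z \<in> set (bvars \<phi>)"
  by (induction \<phi>) auto

lemma bvars_binds: "Z \<in> set (bvars \<phi>) \<Longrightarrow> \<exists>\<chi>. binds \<phi> Z \<chi>"
  unfolding binds_def by (induction \<phi>) auto

lemma binds_unique: "distinct (bvars \<phi>) \<Longrightarrow> binds \<phi> Z \<chi> \<Longrightarrow> binds \<phi> Z \<chi>' \<Longrightarrow> \<chi> = \<chi>'"
  by (induction \<phi>) (auto dest: binds_in_bvars)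

lemma body_eq: "distinct (bvars \<phi>) \<Longrightarrow> binds \<phi> Z \<chi> \<Longrightarrow> body \<phi> Z = \<chi>"
  unfolding body_def by (rule the_equality) (auto simp: binds_def[symmetric] dest: binds_unique)

lemma binds_sub: "binds \<phi> Z \<chi> \<Longrightarrow> \<chi> \<in> sub \<phi>"
  unfolding binds_def by (auto intro: sub_trans)

lemma FVar_sub: "FVar Y \<in> sub \<psi> \<Longrightarrow> Y \<in> fvars \<psi> \<or> Y \<in> set (bvars \<psi>)"
  by (induction \<psi>) auto

lemma moves_simps [simp]:
  "moves M \<phi> (H, FVar Z) = (if Z \<in> set (bvars \<phi>) then {(H, body \<phi> Z)} else {})"
  "moves M \<phi> (H, FNeg p) = {}"
  "moves M \<phi> (H, FConj p q) = {(H, p), (H, q)}"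
  "moves M \<phi> (H, FDisj p q) = {(H, p), (H, q)}"
  "moves M \<phi> ((R, t), DiaC a p) = {((Xs M (tgt r), Tr r), p) | r. r \<in> R \<and> lab r = a \<and> le_c M t r}"
  "moves M \<phi> ((R, t), BoxC a p) = {((Xs M (tgt r), Tr r), p) | r. r \<in> R \<and> lab r = a \<and> le_c M t r}"
  "moves M \<phi> ((R, t), DiaNC a p) =
     {((Xs M (tgt r), Tr r), p) | r. r \<in> R \<and> lab r = a \<and> ominus M t r}"
  "moves M \<phi> ((R, t), BoxNC a p) =
     {((Xs M (tgt r), Tr r), p) | r. r \<in> R \<and> lab r = a \<and> ominus M t r}"
  "moves M \<phi> ((R, t), DiaOt p) = {((N, t), p) | N. N \<in> calX M \<and> sqsub M N R}"
  "moves M \<phi> ((R, t), BoxOt p) = {((N, t), p) | N. N \<in> calX M \<and> sqsub M N R}"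
  "moves M \<phi> (H, Mu Z p) = {(H, FVar Z)}"
  "moves M \<phi> (H, Nu Z p) = {(H, FVar Z)}"
  by (cases H; simp add: moves_def)+

lemma eve_pos_simps [simp]:
  "\<not> eve_pos (H, FVar Z)" "\<not> eve_pos (H, FNeg p)" "\<not> eve_pos (H, FConj p q)"
  "eve_pos (H, FDisj p q)" "eve_pos (H, DiaC a p)" "\<not> eve_pos (H, BoxC a p)"
  "eve_pos (H, DiaNC a p)" "\<not> eve_pos (H, BoxNC a p)" "eve_pos (H, DiaOt p)"
  "\<not> eve_pos (H, BoxOt p)" "\<not> eve_pos (H, Mu Z p)" "\<not> eve_pos (H, Nu Z p)"
  by (simp_all add: eve_pos_def)

lemma eve_wins_final_simps [simp]:
  "eve_wins_final V (H, FVar Z) \<longleftrightarrow> H \<in> V Z"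
  "eve_wins_final V (H, FNeg (FVar Z)) \<longleftrightarrow> H \<notin> V Z"
  "eve_wins_final V (H, BoxC a p)" "eve_wins_final V (H, BoxNC a p)" "eve_wins_final V (H, BoxOt p)"
  by (simp_all add: eve_wins_final_def)

lemma moves_non_variable_eq: "(\<And>Z. snd c \<noteq> FVar Z) \<Longrightarrow> moves M \<phi> c = moves M \<psi> c"
  by (cases c) (auto simp: moves_def split: tfl.splits)

lemma moves_non_variable_target:
  assumes "c' \<in> moves M \<phi> (H, \<chi>)" "\<And>Y. \<chi> \<noteq> FVar Y"
  shows "snd c' \<in> sub \<chi> \<or> (\<exists>Y p. (\<chi> = Mu Y p \<or> \<chi> = Nu Y p) \<and> snd c' = FVar Y)"
  using assms by (cases H; cases \<chi>) auto

(* A binder moves to its variable, which need not occur in its body. *)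
definition xsub :: "('a,'v) tfl \<Rightarrow> ('a,'v) tfl set" where
  "xsub \<psi> = sub \<psi> \<union> FVar ` set (bvars \<psi>)"

lemma moves_xsub:
  assumes "distinct (bvars \<psi>)" "\<chi> \<in> xsub \<psi>" "c' \<in> moves M \<psi> (H, \<chi>)"
  shows "snd c' \<in> xsub \<psi>"
proof (cases "\<exists>Y. \<chi> = FVar Y")
  case True
  then obtain Y where \<chi>: "\<chi> = FVar Y" by blast
  then have Y: "Y \<in> set (bvars \<psi>)" using assms(3) by (simp split: if_splits)
  obtain \<chi>' where b: "binds \<psi> Y \<chi>'" using bvars_binds[OF Y] ..
  have "snd c' = \<chi>'" using assms(3) Y body_eq[OF assms(1) b] \<chi> by simp
  then show ?thesis using binds_sub[OF b] by (simp add: xsub_def)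
next
  case False
  then have \<chi>: "\<chi> \<in> sub \<psi>" using assms(2) unfolding xsub_def by auto
  from False have "\<And>Y. \<chi> \<noteq> FVar Y" by blast
  then consider "snd c' \<in> sub \<chi>" | Y p where "\<chi> = Mu Y p \<or> \<chi> = Nu Y p" "snd c' = FVar Y"
    using moves_non_variable_target[OF assms(3)] by blast
  then show ?thesis
  proof cases
    case 1
    then show ?thesis using sub_trans[OF \<chi>] unfolding xsub_def by blast
  next
    case (2 Y p)
    then have "binds \<psi> Y p" using \<chi> unfolding binds_def by blast
    then have "Y \<in> set (bvars \<psi>)" by (rule binds_in_bvars)
    then show ?thesis using 2(2) unfolding xsub_def by simp
  qed
qed

lemma moves_subformula_eq:
  assumes "distinct (bvars \<Phi>)" "distinct (bvars \<psi>)" "\<psi> \<in> sub \<Phi>"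
    and "\<And>Y. snd c = FVar Y \<Longrightarrow> Y \<in> set (bvars \<Phi>) \<Longrightarrow> Y \<in> set (bvars \<psi>)"
  shows "moves M \<Phi> c = moves M \<psi> c"
proof (cases "\<exists>Y. snd c = FVar Y")
  case True
  then obtain H Y where c: "c = (H, FVar Y)" by (metis prod.collapse)
  show ?thesis
  proof (cases "Y \<in> set (bvars \<psi>)")
    case True
    obtain \<chi> where b: "binds \<psi> Y \<chi>" using bvars_binds[OF True] ..
    then have b': "binds \<Phi> Y \<chi>" using sub_trans[OF assms(3)] unfolding binds_def by blast
    show ?thesis
      using c True binds_in_bvars[OF b'] body_eq[OF assms(1) b'] body_eq[OF assms(2) b] by simp
  next
    case False
    then have "Y \<notin> set (bvars \<Phi>)" using assms(4) c by auto
    then show ?thesis using False c by simp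
  qed
next
  case False
  then show ?thesis by (intro moves_non_variable_eq) auto
qed

lemma moves_root_successor:
  assumes "pnf \<psi>" "c \<in> moves M \<psi> (H, \<psi>)" "\<And>Z \<chi>. \<psi> \<noteq> Mu Z \<chi>" "\<And>Z \<chi>. \<psi> \<noteq> Nu Z \<chi>"
  shows "pnf (snd c) \<and> snd c \<in> sub \<psi> \<and> size (snd c) < size \<psi> \<and> fvars (snd c) \<subseteq> fvars \<psi>"
  using assms by (cases H; cases \<psi>) (auto simp: pnf_def)

lemma infinite_shift_iff: "infinite {i. P (i + k)} \<longleftrightarrow> infinite {i::nat. P i}"
  using eventually_sequentially_seg[of "\<lambda>i. \<not> P i" k]
  by (simp add: frequently_cofinite[symmetric] cofinite_eq_sequentially frequently_def)

lemma eve_wins_inf_shift: "eve_wins_inf \<phi> (\<lambda>n. p (n + k)) \<longleftrightarrow> eve_wins_inf \<phi> p"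
  unfolding eve_wins_inf_def inf_often_var_def
  using infinite_shift_iff[of "\<lambda>i. snd (p i) = FVar _" k] by simp

lemma eve_wins_inf_Suc: "eve_wins_inf \<phi> (\<lambda>n. p (Suc n)) \<Longrightarrow> eve_wins_inf \<phi> p"
  using eve_wins_inf_shift[of \<phi> p 1] by simp

lemma eve_wins_inf_subformula: "\<psi> \<in> sub \<phi> \<Longrightarrow> eve_wins_inf \<psi> p \<Longrightarrow> eve_wins_inf \<phi> p"
  unfolding eve_wins_inf_def by (meson sub_trans)

lemma eve_wins_inf_Nu:
  assumes "infinite {i. snd (p i) = FVar Z}" and "\<And>i. p (Suc i) \<in> moves M (Nu Z \<psi>) (p i)"
  shows "eve_wins_inf (Nu Z \<psi>) p"
  unfolding eve_wins_inf_def
proof (rule exI[of _ Z], rule exI[of _ \<psi>], intro conjI allI impI)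
  show "Nu Z \<psi> \<in> sub (Nu Z \<psi>)" by simp
  show "inf_often_var p Z" using assms(1) by (simp add: inf_often_var_def)
  fix Y assume "inf_often_var p Y"
  then have "{i. snd (p i) = FVar Y} \<noteq> {}"
    unfolding inf_often_var_def using infinite_imp_nonempty by blast
  then obtain i where i: "p i = (fst (p i), FVar Y)" by (auto simp: prod_eq_iff)
  \<comment> \<open>free variables are dead ends, so a play only visits variables bound in the formula\<close>
  have Y: "Y \<in> set (bvars (Nu Z \<psi>))"
    using assms(2)[of i] by (subst (asm) i) (simp split: if_splits)
  obtain \<chi> where "binds (Nu Z \<psi>) Y \<chi>" using bvars_binds[OF Y] ..
  then show "\<exists>\<chi>. Mu Y \<chi> \<in> sub (Nu Z \<psi>) \<or> Nu Y \<chi> \<in> sub (Nu Z \<psi>)"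
    unfolding binds_def by blast
qed

lemma eve_wins_final_update:
  "snd c \<noteq> FVar Z \<Longrightarrow> snd c \<noteq> FNeg (FVar Z) \<Longrightarrow> eve_wins_final (V(Z := Q)) c = eve_wins_final V c"
  by (cases c) (auto simp: eve_wins_final_def split: tfl.splits)

lemma sem_procs: "(\<forall>Z. V Z \<subseteq> procs M) \<Longrightarrow> sem M V \<phi> \<subseteq> procs M"
proof (induction \<phi> arbitrary: V)
  case (Mu Z p)
  have "sem M (V(Z := procs M)) p \<subseteq> procs M" using Mu by auto
  then show ?case by auto
qed (auto simp: dia_c_def dia_nc_def dia_ot_def)

lemma dia_c_mono: "X \<subseteq> Y \<Longrightarrow> dia_c M a X \<subseteq> dia_c M a Y"
  by (auto simp: dia_c_def)

lemma dia_nc_mono: "X \<subseteq> Y \<Longrightarrow> dia_nc M a X \<subseteq> dia_nc M a Y"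
  by (auto simp: dia_nc_def)

lemma dia_ot_mono: "X \<subseteq> Y \<Longrightarrow> dia_ot M X \<subseteq> dia_ot M Y"
  by (fastforce simp: dia_ot_def)

lemma dual_mono: "(\<And>X Y. X \<subseteq> Y \<Longrightarrow> D X \<subseteq> D Y) \<Longrightarrow> X \<subseteq> Y \<Longrightarrow> P - D (P - X) \<subseteq> P - D (P - Y)"
  by (meson Diff_mono order_refl)

lemma sem_mono:
  assumes "neg_on_vars \<psi>" "FNeg (FVar Z) \<notin> sub \<psi>" "A \<subseteq> B"
  shows "sem M (V(Z := A)) \<psi> \<subseteq> sem M (V(Z := B)) \<psi>"
  using assms(1,2)
proof (induction \<psi> arbitrary: V)
  case (Mu Y p)
  have "sem M (V(Z := A, Y := Q)) p \<subseteq> sem M (V(Z := B, Y := Q)) p" for Q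
  proof (cases "Y = Z")
    case False
    have twist: "V(Z := X, Y := Q) = V(Y := Q, Z := X)" for X
      using False by (simp add: fun_upd_twist)
    have "sem M ((V(Y := Q))(Z := A)) p \<subseteq> sem M ((V(Y := Q))(Z := B)) p"
      by (rule Mu.IH) (use Mu.prems in auto)
    then show ?thesis unfolding twist .
  qed simp
  then have "{Q. Q \<subseteq> procs M \<and> sem M (V(Z := B, Y := Q)) p \<subseteq> Q} \<subseteq>
      {Q. Q \<subseteq> procs M \<and> sem M (V(Z := A, Y := Q)) p \<subseteq> Q}" by blast
  then have "\<Inter>{Q. Q \<subseteq> procs M \<and> sem M (V(Z := A, Y := Q)) p \<subseteq> Q} \<subseteq>
      \<Inter>{Q. Q \<subseteq> procs M \<and> sem M (V(Z := B, Y := Q)) p \<subseteq> Q}" by (rule Inter_anti_mono)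
  then show ?case unfolding sem.simps .
next
  case (Nu Y p)
  have "sem M (V(Z := A, Y := Q)) p \<subseteq> sem M (V(Z := B, Y := Q)) p" for Q
  proof (cases "Y = Z")
    case False
    have twist: "V(Z := X, Y := Q) = V(Y := Q, Z := X)" for X
      using False by (simp add: fun_upd_twist)
    have "sem M ((V(Y := Q))(Z := A)) p \<subseteq> sem M ((V(Y := Q))(Z := B)) p"
      by (rule Nu.IH) (use Nu.prems in auto)
    then show ?thesis unfolding twist .
  qed simp
  then have "{Q. Q \<subseteq> procs M \<and> procs M - sem M (V(Z := A, Y := procs M - Q)) p \<subseteq> Q} \<subseteq>
      {Q. Q \<subseteq> procs M \<and> procs M - sem M (V(Z := B, Y := procs M - Q)) p \<subseteq> Q}" by blast
  then have "\<Inter>{Q. Q \<subseteq> procs M \<and> procs M - sem M (V(Z := B, Y := procs M - Q)) p \<subseteq> Q} \<subseteq>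
      \<Inter>{Q. Q \<subseteq> procs M \<and> procs M - sem M (V(Z := A, Y := procs M - Q)) p \<subseteq> Q}"
    by (rule Inter_anti_mono)
  then show ?case unfolding sem.simps by blast
qed (use assms(3) in \<open>auto simp: dual_mono dia_c_mono dia_nc_mono dia_ot_mono\<close>)

lemma sem_Nu_post_fixpoint:
  assumes "neg_on_vars \<chi>" "FNeg (FVar Z) \<notin> sub \<chi>"
  shows "sem M V (Nu Z \<chi>) \<subseteq> sem M (V(Z := sem M V (Nu Z \<chi>))) \<chi>"
proof -
  define G where "G Q = procs M - sem M (V(Z := procs M - Q)) \<chi>" for Q
  define D where "D = \<Inter>{Q. Q \<subseteq> procs M \<and> G Q \<subseteq> Q}"
  have W: "sem M V (Nu Z \<chi>) = procs M - D" unfolding D_def G_def by simp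
  have "G D \<subseteq> Q" if "Q \<subseteq> procs M" "G Q \<subseteq> Q" for Q
  proof -
    have "procs M - Q \<subseteq> procs M - D" using that unfolding D_def by blast
    then have "G D \<subseteq> G Q" unfolding G_def using sem_mono[OF assms] by blast
    then show ?thesis using that(2) by blast
  qed
  then have "G D \<subseteq> D" unfolding D_def by blast
  then show ?thesis unfolding W G_def by blast
qed

lemma procs_successor:
  assumes "is_tsi M" "(R, t) \<in> procs M" "r \<in> R"
  shows "(Xs M (tgt r), Tr r) \<in> procs M"
proof -
  have "r \<in> trans M" using assms(2,3)
    by (auto simp: procs_def calX_def Xs_def support_set_def conflict_free_def)
  then have "tgt r \<in> states M" using assms(1) by (auto simp: is_tsi_def tgt_def)
  then show ?thesis using \<open>r \<in> trans M\<close> by (auto simp: procs_def calX_def acts_def)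
qed

lemma box_c_successor:
  assumes "is_tsi M" "(R, t) \<in> procs M - dia_c M a (procs M - X)" "r \<in> R" "lab r = a" "le_c M t r"
  shows "(Xs M (tgt r), Tr r) \<in> X"
  using assms procs_successor[OF assms(1) _ assms(3), of t] by (auto simp: dia_c_def)

lemma box_nc_successor:
  assumes "is_tsi M" "(R, t) \<in> procs M - dia_nc M a (procs M - X)" "r \<in> R" "lab r = a" "ominus M t r"
  shows "(Xs M (tgt r), Tr r) \<in> X"
  using assms procs_successor[OF assms(1) _ assms(3), of t] by (auto simp: dia_nc_def)

lemma box_ot_successor:
  assumes "(R, t) \<in> procs M - dia_ot M (procs M - X)" "N \<in> calX M" "sqsub M N R"
  shows "(N, t) \<in> X"
  using assms by (auto simp: dia_ot_def procs_def)

lemma sem_first_move_eve: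
  assumes "(R, t) \<in> sem M V \<psi>" "eve_pos ((R, t), \<psi>)"
  shows "\<exists>c\<in>moves M \<psi> ((R, t), \<psi>). fst c \<in> sem M V (snd c)"
proof (cases \<psi>)
  case (DiaC a p)
  then obtain r where "r \<in> R" "lab r = a" "le_c M t r" "(Xs M (tgt r), Tr r) \<in> sem M V p"
    using assms(1) by (auto simp: dia_c_def)
  moreover from this have "((Xs M (tgt r), Tr r), p) \<in> moves M \<psi> ((R, t), \<psi>)"
    unfolding DiaC moves_simps by blast
  ultimately show ?thesis by force
next
  case (DiaNC a p)
  then obtain r where "r \<in> R" "lab r = a" "ominus M t r" "(Xs M (tgt r), Tr r) \<in> sem M V p"
    using assms(1) by (auto simp: dia_nc_def)
  moreover from this have "((Xs M (tgt r), Tr r), p) \<in> moves M \<psi> ((R, t), \<psi>)"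
    unfolding DiaNC moves_simps by blast
  ultimately show ?thesis by force
qed (use assms in \<open>auto simp: dia_ot_def\<close>)

lemma sem_first_move_adam:
  assumes M: "is_tsi M" and H: "(R, t) \<in> sem M V \<psi>" and "\<not> eve_pos ((R, t), \<psi>)"
    and c: "c \<in> moves M \<psi> ((R, t), \<psi>)" and "\<And>Z \<chi>. \<psi> \<noteq> Mu Z \<chi>" "\<And>Z \<chi>. \<psi> \<noteq> Nu Z \<chi>"
  shows "fst c \<in> sem M V (snd c)"
proof (cases \<psi>)
  case (BoxC a p)
  then obtain r where "c = ((Xs M (tgt r), Tr r), p)" "r \<in> R" "lab r = a" "le_c M t r"
    using c unfolding BoxC moves_simps by blast
  then show ?thesis using box_c_successor[OF M] H BoxC by simp
next
  case (BoxNC a p)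
  then obtain r where "c = ((Xs M (tgt r), Tr r), p)" "r \<in> R" "lab r = a" "ominus M t r"
    using c unfolding BoxNC moves_simps by blast
  then show ?thesis using box_nc_successor[OF M] H BoxNC by simp
next
  case (BoxOt p)
  then obtain N where "c = ((N, t), p)" "N \<in> calX M" "sqsub M N R"
    using c unfolding BoxOt moves_simps by blast
  then show ?thesis using box_ot_successor H BoxOt by simp
qed (use assms in auto)

lemma sem_first_move_dead_end:
  assumes "neg_on_vars \<psi>" "(R, t) \<in> sem M V \<psi>" "moves M \<psi> ((R, t), \<psi>) = {}"
  shows "eve_wins_final V ((R, t), \<psi>)"
  using assms by (cases \<psi>) (auto simp: dia_c_def dia_nc_def dia_ot_def)

section \<open>Winning strategies from the semantics\<close>

abbreviation eve_wins_at :: "('s,'a) tsi \<Rightarrow> ('v \<Rightarrow> ('s,'a) proc set) \<Rightarrow> ('a,'v) tfl \<Rightarrow>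
    ('s,'a,'v) config \<Rightarrow> bool" where
  "eve_wins_at M V \<phi> \<equiv> winning_from (moves M \<phi>) (eve_wins_final V) (eve_wins_inf \<phi>)"

lemma eve_wins_at_forced:
  assumes "moves M \<phi> c = {c'}" "eve_wins_at M V \<phi> c'" "\<not> eve_pos c"
  shows "eve_wins_at M V \<phi> c"
proof (rule winning_from_step)
  show "\<exists>c''\<in>moves M \<phi> c. eve_wins_at M V \<phi> c''" if "eve_pos c" using assms(3) that by simp
  show "\<forall>c''\<in>moves M \<phi> c. eve_wins_at M V \<phi> c''" using assms(1,2) by simp
  show "eve_wins_final V c" if "moves M \<phi> c = {}" using assms(1) that by simp
qed (rule eve_wins_inf_Suc)

lemma eve_wins_at_subformula:
  assumes "pnf \<Phi>" "distinct (bvars \<chi>)" "\<chi> \<in> sub \<Phi>" "fvars \<chi> \<subseteq> fvars \<Phi>"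
    and "eve_wins_at M V \<chi> (H, \<chi>)"
  shows "eve_wins_at M V \<Phi> (H, \<chi>)"
proof -
  let ?S = "{c. snd c \<in> xsub \<chi>}"
  obtain \<sigma> where \<sigma>: "winning_strategy (moves M \<chi>) (eve_wins_final V) (eve_wins_inf \<chi>) (H, \<chi>) \<sigma>"
    using assms(5) unfolding winning_from_def by blast
  have "winning_strategy (moves M \<Phi>) (eve_wins_final V) (eve_wins_inf \<Phi>) (H, \<chi>) \<sigma>"
  proof (rule winning_strategy_subgame[OF _ _ _ _ _ \<sigma>, where S = ?S])
    show "moves M \<chi> c \<subseteq> ?S" if "c \<in> ?S" for c
      using moves_xsub[OF assms(2), of "snd c" _ M "fst c"] that by auto
    show "moves M \<Phi> c = moves M \<chi> c" if "c \<in> ?S" for c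
    proof (rule moves_subformula_eq)
      show "distinct (bvars \<Phi>)" using assms(1) by (simp add: pnf_def)
      fix Y assume Y: "snd c = FVar Y" "Y \<in> set (bvars \<Phi>)"
      have "set (bvars \<Phi>) \<inter> fvars \<Phi> = {}" using assms(1) by (simp add: pnf_def)
      then have "Y \<notin> fvars \<chi>" using assms(4) Y(2) by blast
      moreover have "FVar Y \<in> sub \<chi> \<or> Y \<in> set (bvars \<chi>)" using that Y(1) by (auto simp: xsub_def)
      ultimately show "Y \<in> set (bvars \<chi>)" using FVar_sub[of Y \<chi>] by blast
    qed (use assms(2,3) in simp_all)
    show "eve_wins_inf \<Phi> p" if "eve_wins_inf \<chi> p" for p
      using eve_wins_inf_subformula[OF assms(3) that] .
  qed (simp_all add: xsub_def)
  then show ?thesis unfolding winning_from_def by blast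
qed

lemma eve_wins_at_non_binder:
  assumes M: "is_tsi M" and pnf: "pnf \<psi>"
    and not_binder: "\<And>Z \<chi>. \<psi> \<noteq> Mu Z \<chi>" "\<And>Z \<chi>. \<psi> \<noteq> Nu Z \<chi>"
    and H: "H \<in> sem M V \<psi>"
    and IH: "\<And>\<chi> H'. pnf \<chi> \<Longrightarrow> size \<chi> < size \<psi> \<Longrightarrow> H' \<in> sem M V \<chi> \<Longrightarrow> eve_wins_at M V \<chi> (H', \<chi>)"
  shows "eve_wins_at M V \<psi> (H, \<psi>)"
proof -
  obtain R t where Rt: "H = (R, t)" by (cases H)
  have succ: "eve_wins_at M V \<psi> c" if "c \<in> moves M \<psi> (H, \<psi>)" "fst c \<in> sem M V (snd c)" for c
  proof -
    have \<chi>: "pnf (snd c)" "snd c \<in> sub \<psi>" "size (snd c) < size \<psi>" "fvars (snd c) \<subseteq> fvars \<psi>"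
      using moves_root_successor[OF pnf that(1) not_binder] by auto
    have "distinct (bvars (snd c))" using \<chi>(1) by (simp add: pnf_def)
    from eve_wins_at_subformula[OF pnf this \<chi>(2,4) IH[OF \<chi>(1,3) that(2)]]
    show ?thesis by simp
  qed
  show ?thesis
  proof (rule winning_from_step)
    show "\<exists>c\<in>moves M \<psi> (H, \<psi>). eve_wins_at M V \<psi> c" if "eve_pos (H, \<psi>)"
      using sem_first_move_eve[of R t M V \<psi>] H that succ unfolding Rt by blast
    show "\<forall>c\<in>moves M \<psi> (H, \<psi>). eve_wins_at M V \<psi> c" if "\<not> eve_pos (H, \<psi>)"
      using sem_first_move_adam[OF M, of R t V \<psi>] H that succ not_binder unfolding Rt by blast
    show "eve_wins_final V (H, \<psi>)" if "moves M \<psi> (H, \<psi>) = {}"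
      using sem_first_move_dead_end[of \<psi> R t M V] pnf H that unfolding Rt pnf_def by blast
  qed (rule eve_wins_inf_Suc)
qed

lemma fixpoint_subgame:
  assumes pnf: "pnf \<Phi>" and fixpoint: "\<Phi> = Mu Z \<chi> \<or> \<Phi> = Nu Z \<chi>"
  shows fixpoint_subgame_closed: "snd c \<in> xsub \<chi> \<or> snd c = FVar Z \<Longrightarrow> c' \<in> moves M \<chi> c \<Longrightarrow>
      snd c' \<in> xsub \<chi>"
    and fixpoint_subgame_agree: "snd c \<in> xsub \<chi> \<Longrightarrow> snd c \<noteq> FVar Z \<Longrightarrow> moves M \<Phi> c = moves M \<chi> c"
    and fixpoint_subgame_exit: "snd c = FVar Z \<Longrightarrow> moves M \<chi> c = {} \<and> moves M \<Phi> c = {(fst c, \<chi>)}"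
    and fixpoint_subgame_final: "snd c \<in> xsub \<chi> \<Longrightarrow> snd c \<noteq> FVar Z \<Longrightarrow>
      eve_wins_final (V(Z := Q)) c = eve_wins_final V c"
proof -
  have dist: "distinct (bvars \<Phi>)" using pnf by (simp add: pnf_def)
  then have dist_\<chi>: "distinct (bvars \<chi>)" and Z: "Z \<notin> set (bvars \<chi>)" using fixpoint by auto
  have body: "body \<Phi> Z = \<chi>" using body_eq[OF dist] fixpoint by auto
  have sub: "\<chi> \<in> sub \<Phi>" using fixpoint by auto
  have neg: "FNeg (FVar Z) \<notin> xsub \<chi>"
    using pnf fixpoint sub_trans[OF sub] unfolding pnf_def xsub_def by fastforce
  have Z_\<Phi>: "Z \<in> set (bvars \<Phi>)" using fixpoint by auto
  show exit: "moves M \<chi> c = {} \<and> moves M \<Phi> c = {(fst c, \<chi>)}" if "snd c = FVar Z"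
    using that Z Z_\<Phi> body by (cases c) simp
  show "snd c' \<in> xsub \<chi>" if "snd c \<in> xsub \<chi> \<or> snd c = FVar Z" "c' \<in> moves M \<chi> c"
    using that moves_xsub[OF dist_\<chi>, of "snd c" c' M "fst c"] exit by auto
  show "moves M \<Phi> c = moves M \<chi> c" if "snd c \<in> xsub \<chi>" "snd c \<noteq> FVar Z"
    using dist dist_\<chi> sub that fixpoint by (intro moves_subformula_eq) auto
  show "eve_wins_final (V(Z := Q)) c = eve_wins_final V c" if "snd c \<in> xsub \<chi>" "snd c \<noteq> FVar Z"
    using that neg by (intro eve_wins_final_update) auto
qed

lemma eve_wins_at_Mu_body:
  assumes pnf: "pnf (Mu Z \<chi>)"
    and P: "\<And>H. H \<in> P \<Longrightarrow> eve_wins_at M V (Mu Z \<chi>) (H, FVar Z)"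
    and body: "eve_wins_at M (V(Z := P)) \<chi> (H, \<chi>)"
  shows "eve_wins_at M V (Mu Z \<chi>) (H, \<chi>)"
proof -
  let ?\<Phi> = "Mu Z \<chi>"
  let ?S = "{c. snd c \<in> xsub \<chi> \<or> snd c = FVar Z}" and ?T = "{c. snd c = FVar Z}"
  note subgame = fixpoint_subgame[OF pnf, of Z \<chi>, simplified]
  obtain \<sigma> where \<sigma>: "winning_strategy (moves M \<chi>) (eve_wins_final (V(Z := P))) (eve_wins_inf \<chi>) (H, \<chi>) \<sigma>"
    using body unfolding winning_from_def by blast
  show ?thesis
  proof (rule winning_from_switch[OF _ _ _ _ \<sigma>, where S = ?S and T = ?T])
    show "(H, \<chi>) \<in> ?S" by (simp add: xsub_def)
    show "moves M \<chi> c \<subseteq> ?S" if "c \<in> ?S" for c using subgame(1) that by blast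
    show "moves M ?\<Phi> c = moves M \<chi> c" if "c \<in> ?S" "c \<notin> ?T" for c
      by (rule subgame(2)) (use that in auto)
    show "moves M \<chi> c = {}" if "c \<in> ?S" "c \<in> ?T" for c
      using subgame(3)[of c] that by simp
    show "eve_wins_final V c" if "c \<in> ?S" "c \<notin> ?T" "eve_wins_final (V(Z := P)) c" for c
      using subgame(4)[of c V P] that by auto
    show "eve_wins_inf ?\<Phi> p" if "eve_wins_inf \<chi> p" for p
      using eve_wins_inf_subformula[OF _ that] by simp
    show "eve_wins_inf ?\<Phi> p" if "eve_wins_inf ?\<Phi> (\<lambda>n. p (n + k))" for p k
      using that eve_wins_inf_shift by blast
    show "eve_wins_at M V ?\<Phi> c" if hit: "c \<in> ?T" "eve_wins_final (V(Z := P)) c" for c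
    proof -
      obtain H' where c: "c = (H', FVar Z)" using hit(1) by (cases c) simp
      then show ?thesis using hit(2) P by simp
    qed
  qed
qed

lemma eve_wins_at_Mu:
  assumes pnf: "pnf (Mu Z \<chi>)" and V: "\<forall>Y. V Y \<subseteq> procs M" and H: "H \<in> sem M V (Mu Z \<chi>)"
    and IH: "\<And>V H. \<forall>Y. V Y \<subseteq> procs M \<Longrightarrow> H \<in> sem M V \<chi> \<Longrightarrow> eve_wins_at M V \<chi> (H, \<chi>)"
  shows "eve_wins_at M V (Mu Z \<chi>) (H, Mu Z \<chi>)"
proof -
  let ?\<Phi> = "Mu Z \<chi>"
  define P where "P = {H \<in> procs M. eve_wins_at M V ?\<Phi> (H, FVar Z)}"
  have "sem M (V(Z := P)) \<chi> \<subseteq> P"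
  proof
    fix H' assume H': "H' \<in> sem M (V(Z := P)) \<chi>"
    have VP: "\<forall>Y. (V(Z := P)) Y \<subseteq> procs M" using V unfolding P_def by auto
    have "moves M ?\<Phi> (H', FVar Z) = {(H', \<chi>)}"
      using fixpoint_subgame_exit[OF pnf, of Z \<chi> "(H', FVar Z)"] by simp
    moreover have "eve_wins_at M V ?\<Phi> (H', \<chi>)"
      using eve_wins_at_Mu_body[OF pnf _ IH[OF VP H']] unfolding P_def by blast
    ultimately have "eve_wins_at M V ?\<Phi> (H', FVar Z)" by (rule eve_wins_at_forced) simp
    moreover have "H' \<in> procs M" using sem_procs[OF VP] H' by blast
    ultimately show "H' \<in> P" unfolding P_def by blast
  qed
  moreover have "P \<subseteq> procs M" unfolding P_def by blast
  ultimately have "sem M V ?\<Phi> \<subseteq> P" unfolding sem.simps by (intro Inter_lower) blast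
  then have "eve_wins_at M V ?\<Phi> (H, FVar Z)" using H unfolding P_def by blast
  then show ?thesis by (rule eve_wins_at_forced[rotated]) simp_all
qed

lemma eve_wins_at_Nu_variable:
  assumes pnf: "pnf (Nu Z \<chi>)"
    and W: "\<And>H. H \<in> W \<Longrightarrow> eve_wins_at M (V(Z := W)) \<chi> (H, \<chi>)"
    and H: "H \<in> W"
  shows "eve_wins_at M V (Nu Z \<chi>) (H, FVar Z)"
proof -
  let ?\<Phi> = "Nu Z \<chi>"
  let ?S = "{c. snd c \<in> xsub \<chi> \<or> snd c = FVar Z}" and ?T = "{c. snd c = FVar Z}"
  note subgame = fixpoint_subgame[OF pnf, of Z \<chi>, simplified]
  show ?thesis
  proof (rule winning_from_restart[where S = ?S and T = ?T and mv' = "moves M \<chi>"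
        and fw' = "eve_wins_final (V(Z := W))" and iw' = "eve_wins_inf \<chi>" and r = "\<lambda>c. (fst c, \<chi>)"])
    show "(H, FVar Z) \<in> ?S" "(H, FVar Z) \<in> ?T" by simp_all
    show "eve_wins_final (V(Z := W)) (H, FVar Z)" using H by simp
    show "moves M \<chi> c \<subseteq> ?S" if "c \<in> ?S" for c using subgame(1) that by blast
    show "moves M ?\<Phi> c = moves M \<chi> c" if "c \<in> ?S" "c \<notin> ?T" for c
      by (rule subgame(2)) (use that in auto)
    show "moves M ?\<Phi> c = {(fst c, \<chi>)} \<and> (fst c, \<chi>) \<in> ?S \<and> moves M \<chi> c = {} \<and> \<not> eve_pos c"
      if "c \<in> ?S" "c \<in> ?T" for c
      using subgame(3)[of c] that by (cases c) (simp add: xsub_def)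
    show "eve_wins_final V c" if "c \<in> ?S" "c \<notin> ?T" "eve_wins_final (V(Z := W)) c" for c
      using subgame(4)[of c V W] that by auto
    show "eve_wins_at M (V(Z := W)) \<chi> (fst c, \<chi>)"
      if restart: "c \<in> ?T" "eve_wins_final (V(Z := W)) c" for c
    proof -
      obtain H' where c: "c = (H', FVar Z)" using restart(1) by (cases c) simp
      then show ?thesis using restart(2) W by simp
    qed
    show "eve_wins_inf ?\<Phi> p" if "eve_wins_inf \<chi> (\<lambda>n. p (n + k))" for p k
      using eve_wins_inf_subformula[of \<chi> ?\<Phi> p] that unfolding eve_wins_inf_shift by simp
    show "eve_wins_inf ?\<Phi> p" if "infinite {i. p i \<in> ?T}" "\<And>i. p (Suc i) \<in> moves M ?\<Phi> (p i)" for p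
      using that by (intro eve_wins_inf_Nu) simp_all
  qed
qed

lemma eve_wins_at_Nu:
  assumes pnf: "pnf (Nu Z \<chi>)" and V: "\<forall>Y. V Y \<subseteq> procs M" and H: "H \<in> sem M V (Nu Z \<chi>)"
    and IH: "\<And>V H. \<forall>Y. V Y \<subseteq> procs M \<Longrightarrow> H \<in> sem M V \<chi> \<Longrightarrow> eve_wins_at M V \<chi> (H, \<chi>)"
  shows "eve_wins_at M V (Nu Z \<chi>) (H, Nu Z \<chi>)"
proof -
  define W where "W = sem M V (Nu Z \<chi>)"
  have VW: "\<forall>Y. (V(Z := W)) Y \<subseteq> procs M" using V sem_procs[OF V] unfolding W_def by auto
  have "W \<subseteq> sem M (V(Z := W)) \<chi>"
    unfolding W_def using pnf by (intro sem_Nu_post_fixpoint) (auto simp: pnf_def)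
  then have "eve_wins_at M V (Nu Z \<chi>) (H, FVar Z)"
    using eve_wins_at_Nu_variable[OF pnf _ H[folded W_def]] IH[OF VW] by blast
  then show ?thesis by (rule eve_wins_at_forced[rotated]) simp_all
qed

lemma eve_wins_at_sem:
  fixes M :: "('s,'a) tsi" and \<psi> :: "('a,'v) tfl"
  assumes M: "is_tsi M"
  shows "pnf \<psi> \<Longrightarrow> \<forall>Z. V Z \<subseteq> procs M \<Longrightarrow> H \<in> sem M V \<psi> \<Longrightarrow> eve_wins_at M V \<psi> (H, \<psi>)"
proof (induction \<psi> arbitrary: V H rule: measure_induct_rule[where f = size])
  case (less \<psi>)
  have IH: "eve_wins_at M V' \<chi> (H', \<chi>)"
    if "size \<chi> < size \<psi>" "pnf \<chi>" "\<forall>Y. V' Y \<subseteq> procs M" "H' \<in> sem M V' \<chi>"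
    for \<chi> :: "('a,'v) tfl" and V' H'
    using less.IH[OF that] .
  consider (Mu) Z \<chi> where "\<psi> = Mu Z \<chi>" | (Nu) Z \<chi> where "\<psi> = Nu Z \<chi>"
    | (other) "\<And>Z \<chi>. \<psi> \<noteq> Mu Z \<chi>" "\<And>Z \<chi>. \<psi> \<noteq> Nu Z \<chi>"
    by (cases \<psi>) auto
  then show ?case
  proof cases
    case (Mu Z \<chi>)
    have "pnf \<chi>" using less.prems(1) unfolding Mu pnf_def by auto
    then have "eve_wins_at M V' \<chi> (H', \<chi>)" if "\<forall>Y. V' Y \<subseteq> procs M" "H' \<in> sem M V' \<chi>" for V' H'
      using IH[OF _ _ that] unfolding Mu by simp
    with less.prems show ?thesis unfolding Mu by (rule eve_wins_at_Mu)
  next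
    case (Nu Z \<chi>)
    have "pnf \<chi>" using less.prems(1) unfolding Nu pnf_def by auto
    then have "eve_wins_at M V' \<chi> (H', \<chi>)" if "\<forall>Y. V' Y \<subseteq> procs M" "H' \<in> sem M V' \<chi>" for V' H'
      using IH[OF _ _ that] unfolding Nu by simp
    with less.prems show ?thesis unfolding Nu by (rule eve_wins_at_Nu)
  next
    case other
    show ?thesis
    proof (rule eve_wins_at_non_binder[OF M less.prems(1) other less.prems(3)])
      fix \<chi> H' assume "pnf \<chi>" "size \<chi> < size \<psi>" "H' \<in> sem M V \<chi>"
      then show "eve_wins_at M V \<chi> (H', \<chi>)" using IH less.prems(2) by simp
    qed
  qed
qed

theorem theorem7:
  fixes M :: "('s,'a) tsi" and V :: "'v \<Rightarrow> ('s,'a) proc set" and \<phi> :: "('a,'v) tfl"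
  assumes "is_tsi M" and "image_finite M"
    and "\<forall>Z. V Z \<subseteq> procs M"
    and "pnf \<phi>"
    and "H0 M \<in> sem M V \<phi>"
  shows "eve_wins_game M V (H0 M) \<phi>"
  unfolding eve_wins_game_iff using eve_wins_at_sem[OF assms(1,4,3,5)] .

end
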